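(* Let $F$ be a non-archimedean local field over a dyadic place $\mathfrak{p}$, with valuation ring $\mathfrak{o}$, and let $H\cong End(V)$ be a split quaternion algebra over $F$ ($V$ a $2$-dimensional $F$-vector space) with an orthogonal involution $\ddagger$. Let $\lambda\in disc(\ddagger)\cap\mathfrak{o}$ with $\lambda\mathfrak{o}=\iota(disc(\ddagger))$, and suppose $\mathfrak{d}(-\lambda)\neq\mathfrak{p}$. Let $\mathcal{O}$ be a maximal $\ddagger$-order. Then there exist a fractional ideal $\mathfrak{a}$ of $F$ and an $\mathfrak{a}$-modular lattice $\Lambda\subset V$ such that $$\mathcal{O}=End(\Lambda)\cap End(\Lambda^\sharp).$$ Additionally, $disc(\mathcal{O})=disc(H)\cap\iota(disc(\ddagger))=\mathfrak{o}$.
   Context: Orthogonal involution: $F$-linear anti-automorphism of order $2$ with $3$-dimensional $+1$-eigenspace. Orders are $\mathfrak{o}$-lattice subrings with $1$ spanning $H$; a $\ddagger$-order satisfies $\mathcal{O}^\ddagger=\mathcal{O}$; a maximal $\ddagger$-order is not properly contained in another $\ddagger$-order. $b_\ddagger$ is a nondegenerate symmetric bilinear form on $V$ (fixed up to scaling) with $b_\ddagger(v,\sigma w)=b_\ddagger(\sigma^\ddagger v,w)$. Lattices: finitely generated $\mathfrak{o}$-submodules spanning $V$; $\Lambda^\sharp=\{v:b_\ddagger(v,\Lambda)\subset\mathfrak{o}\}$; $End(\Lambda)=\{\sigma:\sigma\Lambda\subset\Lambda\}$. For a fractional ideal $\mathfrak{a}$, $\Lambda$ is $\mathfrak{a}$-modular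 if $\Lambda=\mathfrak{a}\Lambda^\sharp$. $disc(\mathcal{O})$ = reduced discriminant, $disc(H)=\mathfrak{o}$ (split). $disc(\ddagger)=nrd(h)(F^\times)^2$ for nonzero $h$ with $h^\ddagger=-h$; $\iota([\mu])$ = ideal of $\mathfrak{o}$ generated by $[\mu]\cap\mathfrak{o}$. Quadratic defect: $\mathfrak{d}(\alpha)=\bigcap_{\xi\in F}(\alpha-\xi^2)\mathfrak{o}$. *)

theory Defs
  imports "HOL-Analysis.Analysis"
begin

text \<open>A normalized discrete valuation v on a field (the value at 0 is irrelevant;
  0 is treated as having valuation +infinity throughout).\<close>
definition discrete_valuation :: "('a::field \<Rightarrow> int) \<Rightarrow> bool" where
  "discrete_valuation v \<longleftrightarrow>
     (\<forall>x y. x \<noteq> 0 \<longrightarrow> y \<noteq> 0 \<longrightarrow> v (x * y) = v x + v y) \<and>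
     (\<forall>x y. x \<noteq> 0 \<longrightarrow> y \<noteq> 0 \<longrightarrow> x + y \<noteq> 0 \<longrightarrow> min (v x) (v y) \<le> v (x + y)) \<and>
     (\<exists>\<pi>. \<pi> \<noteq> 0 \<and> v \<pi> = 1)"

definition vball :: "('a::field \<Rightarrow> int) \<Rightarrow> int \<Rightarrow> 'a set" where
  "vball v k = {x. x = 0 \<or> k \<le> v x}"

definition val_ring :: "('a::field \<Rightarrow> int) \<Rightarrow> 'a set" where
  "val_ring v = vball v 0"

definition max_ideal :: "('a::field \<Rightarrow> int) \<Rightarrow> 'a set" where
  "max_ideal v = vball v 1"

definition val_complete :: "('a::field \<Rightarrow> int) \<Rightarrow> bool" where
  "val_complete v \<longleftrightarrow>
     (\<forall>x :: nat \<Rightarrow> 'a.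
        (\<forall>k. \<exists>N. \<forall>m\<ge>N. \<forall>n\<ge>N. x m - x n \<in> vball v k) \<longrightarrow>
        (\<exists>L. \<forall>k. \<exists>N. \<forall>n\<ge>N. x n - L \<in> vball v k))"

definition finite_residue_field :: "('a::field \<Rightarrow> int) \<Rightarrow> bool" where
  "finite_residue_field v \<longleftrightarrow>
     (\<exists>S. finite S \<and> S \<subseteq> val_ring v \<and>
        (\<forall>x\<in>val_ring v. \<exists>s\<in>S. x - s \<in> max_ideal v))"

definition dyadic_local_field :: "('a::field_char_0 \<Rightarrow> int) \<Rightarrow> bool" where
  "dyadic_local_field v \<longleftrightarrow> discrete_valuation v \<and> val_complete v \<and>
     finite_residue_field v \<and> (2::'a) \<in> max_ideal v"

definition span_with :: "'r set \<Rightarrow> ('r \<Rightarrow> 'b \<Rightarrow> 'b::comm_monoid_add) \<Rightarrow> 'b set \<Rightarrow> 'b set" where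
  "span_with R sc S = {y. \<exists>T c. finite T \<and> T \<subseteq> S \<and> (\<forall>x\<in>T. c x \<in> R) \<and>
                            y = (\<Sum>x\<in>T. sc (c x) x)}"

definition o_lattice :: "('a::field \<Rightarrow> int) \<Rightarrow> ('a \<Rightarrow> 'b \<Rightarrow> 'b::comm_monoid_add) \<Rightarrow> 'b set \<Rightarrow> bool" where
  "o_lattice v sc L \<longleftrightarrow>
     (\<exists>S. finite S \<and> L = span_with (val_ring v) sc S) \<and> span_with UNIV sc L = UNIV"

definition frac_ideal :: "('a::field \<Rightarrow> int) \<Rightarrow> 'a set \<Rightarrow> bool" where
  "frac_ideal v I \<longleftrightarrow> o_lattice v (*) I"

definition ideal_gen :: "('a::field \<Rightarrow> int) \<Rightarrow> 'a set \<Rightarrow> 'a set" where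
  "ideal_gen v S = span_with (val_ring v) (*) S"

definition ideal_prod :: "('a::field \<Rightarrow> int) \<Rightarrow> 'a set \<Rightarrow> 'a set \<Rightarrow> 'a set" where
  "ideal_prod v I J = ideal_gen v {a * b | a b. a \<in> I \<and> b \<in> J}"

definition quad_defect :: "('a::field \<Rightarrow> int) \<Rightarrow> 'a \<Rightarrow> 'a set" where
  "quad_defect v \<alpha> = (\<Inter>\<xi>. {(\<alpha> - \<xi>\<^sup>2) * r | r. r \<in> val_ring v})"

definition hscale :: "'a::semiring_1 \<Rightarrow> 'a^2^2 \<Rightarrow> 'a^2^2" where
  "hscale c A = (\<chi> i j. c * A $ i $ j)"

text \<open>The +1-eigenspace of an involution has F-dimension 3 (explicit basis).\<close>
definition dim3 :: "('a::field^2^2) set \<Rightarrow> bool" where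
  "dim3 S \<longleftrightarrow> (\<exists>A1 A2 A3.
      (\<forall>c1 c2 c3. hscale c1 A1 + hscale c2 A2 + hscale c3 A3 = 0 \<longrightarrow>
                   c1 = 0 \<and> c2 = 0 \<and> c3 = 0) \<and>
      S = {hscale c1 A1 + hscale c2 A2 + hscale c3 A3 | c1 c2 c3. True})"

definition orthogonal_involution :: "('a::field^2^2 \<Rightarrow> 'a^2^2) \<Rightarrow> bool" where
  "orthogonal_involution dg \<longleftrightarrow>
     (\<forall>A B. dg (A + B) = dg A + dg B) \<and>
     (\<forall>c A. dg (hscale c A) = hscale c (dg A)) \<and>
     (\<forall>A B. dg (A ** B) = dg B ** dg A) \<and>
     (\<forall>A. dg (dg A) = A) \<and> dg \<noteq> id \<and>
     dim3 {A. dg A = A}"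

definition adapted_form :: "('a::field^2^2 \<Rightarrow> 'a^2^2) \<Rightarrow> ('a^2 \<Rightarrow> 'a^2 \<Rightarrow> 'a) \<Rightarrow> bool" where
  "adapted_form dg b \<longleftrightarrow>
     (\<forall>u v w. b (u + v) w = b u w + b v w) \<and>
     (\<forall>c v w. b (c *s v) w = c * b v w) \<and>
     (\<forall>v w. b v w = b w v) \<and>
     (\<forall>v. (\<forall>w. b v w = 0) \<longrightarrow> v = 0) \<and>
     (\<forall>\<sigma> v w. b v (\<sigma> *v w) = b (dg \<sigma> *v v) w)"

definition is_order :: "('a::field \<Rightarrow> int) \<Rightarrow> ('a^2^2) set \<Rightarrow> bool" where
  "is_order v Ord \<longleftrightarrow> o_lattice v hscale Ord \<and> mat 1 \<in> Ord \<and> (\<forall>A\<in>Ord. \<forall>B\<in>Ord. A ** B \<in> Ord)"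

definition inv_order :: "('a::field \<Rightarrow> int) \<Rightarrow> ('a^2^2 \<Rightarrow> 'a^2^2) \<Rightarrow> ('a^2^2) set \<Rightarrow> bool" where
  "inv_order v dg Ord \<longleftrightarrow> is_order v Ord \<and> dg ` Ord = Ord"

definition max_inv_order :: "('a::field \<Rightarrow> int) \<Rightarrow> ('a^2^2 \<Rightarrow> 'a^2^2) \<Rightarrow> ('a^2^2) set \<Rightarrow> bool" where
  "max_inv_order v dg Ord \<longleftrightarrow> inv_order v dg Ord \<and>
     (\<forall>Ord'. inv_order v dg Ord' \<and> Ord \<subseteq> Ord' \<longrightarrow> Ord' = Ord)"

definition dual_lattice :: "('a::field \<Rightarrow> int) \<Rightarrow> ('a^2 \<Rightarrow> 'a^2 \<Rightarrow> 'a) \<Rightarrow> ('a^2) set \<Rightarrow> ('a^2) set" where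
  "dual_lattice v b L = {x. \<forall>w\<in>L. b x w \<in> val_ring v}"

definition End_lat :: "('a::semiring_1^2) set \<Rightarrow> ('a^2^2) set" where
  "End_lat L = {\<sigma>. (\<lambda>x. \<sigma> *v x) ` L \<subseteq> L}"

definition ideal_times_lattice :: "('a::field \<Rightarrow> int) \<Rightarrow> 'a set \<Rightarrow> ('a^2) set \<Rightarrow> ('a^2) set" where
  "ideal_times_lattice v I L = span_with (val_ring v) (*s) {a *s x | a x. a \<in> I \<and> x \<in> L}"

definition modular_lattice ::
  "('a::field \<Rightarrow> int) \<Rightarrow> ('a^2 \<Rightarrow> 'a^2 \<Rightarrow> 'a) \<Rightarrow> 'a set \<Rightarrow> ('a^2) set \<Rightarrow> bool" where
  "modular_lattice v b I L \<longleftrightarrow> o_lattice v (*s) L \<and> L = ideal_times_lattice v I (dual_lattice v b L)"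

text \<open>Discriminant of the involution (square class of nrd(h), h nonzero skew) and iota.\<close>
definition disc_inv :: "('a::field^2^2 \<Rightarrow> 'a^2^2) \<Rightarrow> 'a set" where
  "disc_inv dg = (let h = (SOME h. h \<noteq> 0 \<and> dg h = - h) in {det h * c\<^sup>2 | c. c \<noteq> 0})"

definition iota :: "('a::field \<Rightarrow> int) \<Rightarrow> 'a set \<Rightarrow> 'a set" where
  "iota v D = ideal_gen v (D \<inter> val_ring v)"

definition disc_full :: "('a::field \<Rightarrow> int) \<Rightarrow> ('a^2^2) set \<Rightarrow> 'a set" where
  "disc_full v Ord = ideal_gen v
     {det (\<chi> (i::4) (j::4). trace (\<alpha> i ** \<alpha> j)) | \<alpha>. \<forall>i. \<alpha> i \<in> Ord}"

definition reduced_disc :: "('a::field \<Rightarrow> int) \<Rightarrow> ('a^2^2) set \<Rightarrow> 'a set" where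
  "reduced_disc v Ord = (THE D. frac_ideal v D \<and> ideal_prod v D D = disc_full v Ord)"

text \<open>disc(H) = o since H is split.\<close>
definition disc_H :: "('a::field \<Rightarrow> int) \<Rightarrow> 'a set" where
  "disc_H v = val_ring v"

end

theory Submission
  imports Defs
begin

text \<open>Since \<lambda> generates iota(disc), an odd valuation of \<lambda> would make the quadratic defect of
  -\<lambda> equal to the maximal ideal; hence \<lambda> is a unit, iota(disc) = \<O>, and the determinant of the
  form has even valuation, since its product with det h is a square.  A maximal dg-order stabilizes some lattice with a basis; by a Jordan
  splitting of its Gram matrix, using the dg-stability of the order to control the rescaling
  step, it even stabilizes a modular lattice L.  The endomorphism ring of L is a dg-order equal
  to that of its dual (a scalar multiple of L), so maximality gives equality.  That ring is
  conjugate to M_2(\<O>), whose trace form on matrix units has determinant -1, so the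
  discriminant is \<O>.\<close>

section \<open>Discrete valuations\<close>

locale valued_field =
  fixes v :: "'a::field_char_0 \<Rightarrow> int"
  assumes discrete_valuation: "discrete_valuation v"
begin

abbreviation \<O> :: "'a set" where "\<O> \<equiv> val_ring v"

lemma v_mult: "x \<noteq> 0 \<Longrightarrow> y \<noteq> 0 \<Longrightarrow> v (x * y) = v x + v y"
  using discrete_valuation unfolding discrete_valuation_def by blast

lemma v_add: "x \<noteq> 0 \<Longrightarrow> y \<noteq> 0 \<Longrightarrow> x + y \<noteq> 0 \<Longrightarrow> min (v x) (v y) \<le> v (x + y)"
  using discrete_valuation unfolding discrete_valuation_def by blast

lemma v_one: "v 1 = 0"
  using v_mult[of 1 1] by simp

lemma v_inverse: "x \<noteq> 0 \<Longrightarrow> v (inverse x) = - v x"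
  using v_mult[of x "inverse x"] v_one by simp

lemma v_divide: "x \<noteq> 0 \<Longrightarrow> y \<noteq> 0 \<Longrightarrow> v (x / y) = v x - v y"
  by (simp add: divide_inverse v_mult v_inverse)

lemma v_minus: "v (- x) = v x"
proof (cases "x = 0")
  case False
  have "v (-1) = 0" using v_mult[of "-1" "-1"] v_one by simp
  then show ?thesis using v_mult[of "-1" x] False by simp
qed simp

lemma v_power: "x \<noteq> 0 \<Longrightarrow> v (x ^ n) = int n * v x"
  by (induction n) (auto simp: v_one v_mult algebra_simps)

lemma v_add_strict:
  assumes "x \<noteq> 0" "y \<noteq> 0" "v x < v y"
  shows "x + y \<noteq> 0 \<and> v (x + y) = v x"
proof -
  have ne: "x + y \<noteq> 0"
  proof
    assume "x + y = 0"
    then have "y = - x" by (simp add: eq_neg_iff_add_eq_0 add.commute)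
    then show False using assms(3) v_minus by simp
  qed
  have "min (v x) (v y) \<le> v (x + y)" using v_add assms ne by blast
  moreover have "min (v (x + y)) (v (-y)) \<le> v x"
    using v_add[of "x + y" "- y"] ne assms by simp
  ultimately show ?thesis using assms(3) ne by (auto simp: v_minus)
qed

lemma v_diff_strict: "x \<noteq> 0 \<Longrightarrow> y \<noteq> 0 \<Longrightarrow> v x < v y \<Longrightarrow> x - y \<noteq> 0 \<and> v (x - y) = v x"
  using v_add_strict[of x "- y"] by (simp add: v_minus)

definition uniformizer :: 'a (\<open>\<pi>\<close>) where "\<pi> = (SOME p. p \<noteq> 0 \<and> v p = 1)"

lemma uniformizer: "\<pi> \<noteq> 0" "v \<pi> = 1"
proof -
  have "\<exists>p. p \<noteq> 0 \<and> v p = 1" using discrete_valuation unfolding discrete_valuation_def by blast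
  then have "\<pi> \<noteq> 0 \<and> v \<pi> = 1" unfolding uniformizer_def by (rule someI_ex)
  then show "\<pi> \<noteq> 0" "v \<pi> = 1" by auto
qed

lemma uniformizer_powi_nonzero: "\<pi> powi k \<noteq> 0"
  using uniformizer power_int_not_zero by blast

lemma v_uniformizer_powi: "v (\<pi> powi k) = k"
proof (cases "k \<ge> 0")
  case True
  then obtain n where "k = int n" by (metis nonneg_eq_int)
  then show ?thesis using v_power[OF uniformizer(1)] uniformizer(2) by simp
next
  case False
  then obtain n where n: "k = - int n" by (metis nonpos_int_cases linorder_not_le less_imp_le)
  have "\<pi> ^ n \<noteq> 0" using uniformizer by simp
  then show ?thesis
    using v_power[OF uniformizer(1), of n] uniformizer(2) n by (simp add: power_int_minus v_inverse)
qed

lemma uniformizer_powi_add: "\<pi> powi (j + k) = \<pi> powi j * \<pi> powi k"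
  using uniformizer by (simp add: power_int_add)

lemma uniformizer_powi_minus_cancel: "\<pi> powi k * \<pi> powi (- k) = 1"
  using uniformizer_powi_add[of k "- k"] by simp

lemma vball_iff: "x \<in> vball v k \<longleftrightarrow> x = 0 \<or> k \<le> v x"
  by (simp add: vball_def)

lemma val_ring_eq_vball: "\<O> = vball v 0"
  by (simp add: val_ring_def)

lemma val_ring_iff: "x \<in> \<O> \<longleftrightarrow> x = 0 \<or> 0 \<le> v x"
  by (simp add: val_ring_eq_vball vball_iff)

lemma vball_add: "x \<in> vball v k \<Longrightarrow> y \<in> vball v k \<Longrightarrow> x + y \<in> vball v k"
  unfolding vball_iff using v_add[of x y] by fastforce

lemma vball_minus: "x \<in> vball v k \<Longrightarrow> - x \<in> vball v k"
  unfolding vball_iff by (auto simp: v_minus)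

lemma vball_diff: "x \<in> vball v k \<Longrightarrow> y \<in> vball v k \<Longrightarrow> x - y \<in> vball v k"
  using vball_add[of x k "- y"] vball_minus by simp

lemma vball_mult: "x \<in> vball v k \<Longrightarrow> y \<in> vball v l \<Longrightarrow> x * y \<in> vball v (k + l)"
  unfolding vball_iff by (cases "x = 0"; cases "y = 0") (auto simp: v_mult)

lemma vball_mono: "x \<in> vball v l \<Longrightarrow> k \<le> l \<Longrightarrow> x \<in> vball v k"
  unfolding vball_iff by auto

lemma vball_divide: "x \<in> vball v k \<Longrightarrow> y \<noteq> 0 \<Longrightarrow> x / y \<in> vball v (k - v y)"
  unfolding vball_iff by (cases "x = 0") (auto simp: v_divide)

lemma uniformizer_powi_in_vball: "\<pi> powi k \<in> vball v k"
  by (simp add: vball_iff v_uniformizer_powi)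

lemma self_in_vball: "x \<in> vball v (v x)"
  by (simp add: vball_iff)

lemma zero_in_vball [simp]: "0 \<in> vball v k"
  by (simp add: vball_iff)

lemma val_ring_zero [simp]: "0 \<in> \<O>" and val_ring_one [simp]: "1 \<in> \<O>"
  by (auto simp: val_ring_iff v_one)

lemma val_ring_add: "x \<in> \<O> \<Longrightarrow> y \<in> \<O> \<Longrightarrow> x + y \<in> \<O>"
  unfolding val_ring_eq_vball by (rule vball_add)

lemma val_ring_minus: "x \<in> \<O> \<Longrightarrow> - x \<in> \<O>"
  unfolding val_ring_eq_vball by (rule vball_minus)

lemma val_ring_diff: "x \<in> \<O> \<Longrightarrow> y \<in> \<O> \<Longrightarrow> x - y \<in> \<O>"
  unfolding val_ring_eq_vball by (rule vball_diff)

lemma val_ring_mult: "x \<in> \<O> \<Longrightarrow> y \<in> \<O> \<Longrightarrow> x * y \<in> \<O>"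
  unfolding val_ring_eq_vball using vball_mult[of x 0 y 0] by simp

lemma val_ring_sum: "(\<And>i. i \<in> A \<Longrightarrow> f i \<in> \<O>) \<Longrightarrow> sum f A \<in> \<O>"
  by (induction A rule: infinite_finite_induct) (auto intro: val_ring_add)

lemma val_ring_prod: "(\<And>i. i \<in> A \<Longrightarrow> f i \<in> \<O>) \<Longrightarrow> prod f A \<in> \<O>"
  by (induction A rule: infinite_finite_induct) (auto intro: val_ring_mult)

lemma val_ring_of_int: "of_int n \<in> \<O>"
proof -
  have "of_nat m \<in> \<O>" for m by (induction m) (auto intro: val_ring_add)
  then show ?thesis by (cases n rule: int_cases) (auto simp: val_ring_minus val_ring_diff)
qed

lemma val_ring_divide: "x \<noteq> 0 \<Longrightarrow> y \<noteq> 0 \<Longrightarrow> v y \<le> v x \<Longrightarrow> x / y \<in> \<O>"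
  using v_divide val_ring_iff by auto

lemma val_ring_uniformizer_powi: "k \<ge> 0 \<Longrightarrow> \<pi> powi k \<in> \<O>"
  using v_uniformizer_powi val_ring_iff by auto

lemma vball_scale: "r \<in> \<O> \<Longrightarrow> x \<in> vball v k \<Longrightarrow> r * x \<in> vball v k"
  using vball_mult[of r 0 x k] by (simp add: val_ring_eq_vball)

end

definition mat2_inv :: "'a::field^2^2 \<Rightarrow> 'a^2^2" where
  "mat2_inv P = (\<chi> i j. (if i = 1 then (if j = 1 then P$2$2 else - P$1$2)
                        else (if j = 1 then - P$2$1 else P$1$1)) / det P)"

lemma mat2_inv_nth:
  "mat2_inv P $ 1 $ 1 = P$2$2 / det P" "mat2_inv P $ 1 $ 2 = - P$1$2 / det P"
  "mat2_inv P $ 2 $ 1 = - P$2$1 / det P" "mat2_inv P $ 2 $ 2 = P$1$1 / det P"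
  by (simp_all add: mat2_inv_def)

lemmas mat2_simps = vec_eq_iff forall_2 matrix_matrix_mult_def matrix_vector_mult_def sum_2
  mat_def mat2_inv_nth transpose_def

lemma mat2_inv_right: "det P \<noteq> 0 \<Longrightarrow> P ** mat2_inv P = mat 1"
  by (simp add: mat2_simps field_simps) (simp add: det_2 algebra_simps)

lemma mat2_inv_left: "det P \<noteq> 0 \<Longrightarrow> mat2_inv P ** P = mat 1"
  by (simp add: mat2_simps field_simps) (simp add: det_2 algebra_simps)

lemma matrix_left_right_inverse_eq:
  assumes "X ** M = mat 1" "M ** Y = mat 1"
  shows "X = (Y::'a::semiring_1^'n^'n)"
proof -
  have "X = X ** (M ** Y)" using assms(2) by simp
  also have "\<dots> = (X ** M) ** Y" by (simp add: matrix_mul_assoc)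
  also have "\<dots> = Y" using assms(1) by simp
  finally show ?thesis .
qed

lemma mat2_inv_mult:
  assumes "det A \<noteq> 0" "det B \<noteq> 0"
  shows "mat2_inv (A ** B) = mat2_inv B ** mat2_inv A"
proof (rule matrix_left_right_inverse_eq[symmetric])
  show "(A ** B) ** mat2_inv (A ** B) = mat 1"
    using assms by (simp add: det_mul mat2_inv_right)
  have "(mat2_inv B ** mat2_inv A) ** (A ** B) = mat2_inv B ** ((mat2_inv A ** A) ** B)"
    by (simp add: matrix_mul_assoc)
  then show "(mat2_inv B ** mat2_inv A) ** (A ** B) = mat 1"
    using assms by (simp add: mat2_inv_left)
qed

lemma mat2_inv_cancel_left: "det P \<noteq> 0 \<Longrightarrow> P *v (mat2_inv P *v x) = x"
  by (simp add: matrix_vector_mul_assoc mat2_inv_right)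

lemma mat2_inv_cancel_left': "det P \<noteq> 0 \<Longrightarrow> mat2_inv P *v (P *v x) = x"
  by (simp add: matrix_vector_mul_assoc mat2_inv_left)

lemma mat2_inv_cancel_right: "det P \<noteq> 0 \<Longrightarrow> X ** mat2_inv P ** P = X"
  by (simp add: matrix_mul_assoc[symmetric] mat2_inv_left)

lemma mat2_conj_cancel: "det P \<noteq> 0 \<Longrightarrow> P ** (mat2_inv P ** \<sigma> ** P) ** mat2_inv P = \<sigma>"
  by (simp add: matrix_mul_assoc mat2_inv_right) (simp add: mat2_inv_right flip: matrix_mul_assoc)

lemma mat2_conj_mult:
  "det P \<noteq> 0 \<Longrightarrow> mat2_inv P ** (A ** B) ** P = (mat2_inv P ** A ** P) ** (mat2_inv P ** B ** P)"
  by (simp add: matrix_mul_assoc mat2_inv_right) (simp add: mat2_inv_right flip: matrix_mul_assoc)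

lemma trace_mat2_conj: "det P \<noteq> 0 \<Longrightarrow> trace (P ** M ** mat2_inv P) = trace (M::'a::field^2^2)"
proof -
  assume d: "det P \<noteq> 0"
  have "trace (P ** M ** mat2_inv P) = trace ((M ** mat2_inv P) ** P)"
    by (metis matrix_mul_assoc trace_mul_sym)
  also have "\<dots> = trace M" using d by (simp add: matrix_mul_assoc[symmetric] mat2_inv_left)
  finally show ?thesis .
qed

lemma mat_vec_axis: "((M::'b::semiring_1^2^2) *v axis j 1) $ i = M $ i $ j"
  using exhaust_2[of j] by (auto simp: matrix_vector_mult_def sum_2 axis_def)

lemma mat_vec_expand: "(P::'a::comm_ring_1^2^2) *v x = x$1 *s (P *v axis 1 1) + x$2 *s (P *v axis 2 1)"
  by (simp add: vec_eq_iff forall_2 matrix_vector_mult_def sum_2 axis_def)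

lemma mat_vec_smult: "A *v (c *s x) = c *s (A *v (x::'a::comm_ring_1^'n))"
  by (simp add: vec_eq_iff matrix_vector_mult_def sum_distrib_left ac_simps)

lemma matrix_add_rdistrib: "(B + C) ** A = B ** A + C ** (A::'a::semiring_1^'n^'n)"
  by (simp add: vec_eq_iff matrix_matrix_mult_def distrib_right sum.distrib)

lemma hscale_nth: "hscale c A $ i $ j = c * A $ i $ j"
  by (simp add: hscale_def)

lemma hscale_hscale: "hscale a (hscale c A) = hscale (a * c) A"
  by (simp add: hscale_def vec_eq_iff mult.assoc)

lemma hscale_one [simp]: "hscale 1 A = A"
  by (simp add: hscale_def vec_eq_iff)

lemma hscale_zero: "hscale 0 (A::'a::comm_ring_1^2^2) = 0"
  by (simp add: hscale_def vec_eq_iff)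

lemma hscale_minus_one: "hscale (-1) A = - (A::'a::ring_1^2^2)"
  by (simp add: hscale_def vec_eq_iff)

lemma hscale_add: "hscale (a + c) A = hscale a A + hscale c (A::'a::comm_ring_1^2^2)"
  by (simp add: hscale_def vec_eq_iff distrib_right)

lemma hscale_inj: "c \<noteq> 0 \<Longrightarrow> hscale c A = hscale c B \<Longrightarrow> A = (B::'a::field^2^2)"
  by (simp add: vec_eq_iff hscale_def)

lemma det_hscale: "det (hscale c (A::'a::field^2^2)) = c\<^sup>2 * det A"
  by (simp add: det_2 hscale_nth power2_eq_square algebra_simps)

lemma matrix_mult_hscale_right: "A ** hscale c B = hscale c (A ** (B::'a::comm_ring_1^2^2))"
  by (simp add: vec_eq_iff hscale_def matrix_matrix_mult_def sum_distrib_left ac_simps)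

lemma matrix_mult_hscale_left: "hscale c B ** A = hscale c (B ** (A::'a::comm_ring_1^2^2))"
  by (simp add: vec_eq_iff hscale_def matrix_matrix_mult_def sum_distrib_left ac_simps)

lemma hscale_mat_vec: "hscale c A *v x = c *s (A *v x)"
  by (simp add: vec_eq_iff matrix_vector_mult_def sum_distrib_left ac_simps hscale_def)

definition mat_unit :: "2 \<Rightarrow> 2 \<Rightarrow> 'a::field^2^2" where
  "mat_unit i j = (\<chi> r s. if r = i \<and> s = j then 1 else 0)"

lemma mat_unit_nth [simp]: "mat_unit i j $ r $ s = (if r = i \<and> s = j then 1 else 0)"
  by (simp add: mat_unit_def)

lemma trace_mat_unit_mult:
  "trace (mat_unit a b ** mat_unit c d :: 'a::field^2^2) = (if b = c \<and> a = d then 1 else 0)"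
  using exhaust_2[of a] exhaust_2[of b] exhaust_2[of c] exhaust_2[of d]
  by (elim disjE) (simp_all add: trace_def sum_2 matrix_matrix_mult_def)

lemma mat_unit_expand:
  "(C::'a::field^2^2) = hscale (C$1$1) (mat_unit 1 1) + hscale (C$1$2) (mat_unit 1 2)
     + hscale (C$2$1) (mat_unit 2 1) + hscale (C$2$2) (mat_unit 2 2)"
  by (simp add: vec_eq_iff forall_2 hscale_def)

lemma mat2_conj_expand:
  "P ** C ** Q = hscale (C$1$1) (P ** mat_unit 1 1 ** Q) + hscale (C$1$2) (P ** mat_unit 1 2 ** Q)
     + hscale (C$2$1) (P ** mat_unit 2 1 ** Q) + hscale (C$2$2) (P ** mat_unit 2 2 ** (Q::'a::field^2^2))"
  by (subst mat_unit_expand[of C])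
    (simp add: matrix_add_ldistrib matrix_add_rdistrib matrix_mult_hscale_right matrix_mult_hscale_left)

definition shear :: "'a::field \<Rightarrow> 'a^2^2" where
  "shear t = (\<chi> i j. if i = j then 1 else if i = 1 then t else 0)"

definition diag2 :: "'a::field \<Rightarrow> 'a^2^2" where
  "diag2 s = (\<chi> i j. if i = j then (if i = 1 then 1 else s) else 0)"

definition swap2 :: "'a::field^2^2" where
  "swap2 = (\<chi> i j. if i = j then 0 else 1)"

lemma shear_nth [simp]:
  "shear t $ 1 $ 1 = 1" "shear t $ 1 $ 2 = t" "shear t $ 2 $ 1 = 0" "shear t $ 2 $ 2 = 1"
  by (simp_all add: shear_def)

lemma diag2_nth [simp]:
  "diag2 s $ 1 $ 1 = 1" "diag2 s $ 1 $ 2 = 0" "diag2 s $ 2 $ 1 = 0" "diag2 s $ 2 $ 2 = s"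
  by (simp_all add: diag2_def)

lemma swap2_nth [simp]:
  "swap2 $ 1 $ 1 = (0::'a::field)" "swap2 $ 1 $ 2 = (1::'a)" "swap2 $ 2 $ 1 = (1::'a)" "swap2 $ 2 $ 2 = (0::'a)"
  by (simp_all add: swap2_def)

lemma det_shear: "det (shear t) = 1"
  by (simp add: det_2)

lemma det_diag2: "det (diag2 s) = s"
  by (simp add: det_2)

lemma det_swap2: "det (swap2 :: 'a::field^2^2) = -1"
  by (simp add: det_2)

lemma shear_congruence_diagonal:
  fixes G :: "'a::field^2^2"
  assumes "G$2$1 = G$1$2" "G$1$1 \<noteq> 0"
  defines "S \<equiv> transpose (shear (- (G$1$2 / G$1$1))) ** G ** shear (- (G$1$2 / G$1$1))"
  shows "S$1$1 = G$1$1" "S$1$2 = 0" "S$2$1 = 0" "S$2$2 = G$2$2 - (G$1$2)\<^sup>2 / G$1$1"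
  using assms by (simp_all add: mat2_simps field_simps power2_eq_square)

definition columns2 :: "'a::field^2 \<Rightarrow> 'a^2 \<Rightarrow> 'a^2^2" where
  "columns2 f g = (\<chi> i j. if j = 1 then f$i else g$i)"

lemma columns2_mat_vec: "columns2 f g *v x = x$1 *s f + x$2 *s g"
  by (simp add: columns2_def vec_eq_iff forall_2 matrix_vector_mult_def sum_2 mult.commute)

lemma det_columns2: "det (columns2 f g) = f$1 * g$2 - g$1 * f$2"
  by (simp add: columns2_def det_2)

definition bil :: "'a::comm_ring_1^2^2 \<Rightarrow> 'a^2 \<Rightarrow> 'a^2 \<Rightarrow> 'a" where
  "bil M x y = x$1 * (M$1$1 * y$1 + M$1$2 * y$2) + x$2 * (M$2$1 * y$1 + M$2$2 * y$2)"

lemma bil_mat_vec_right: "bil M x (A *v y) = bil (M ** A) x y"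
  by (simp add: bil_def mat2_simps ring_distribs ac_simps)

lemma bil_mat_vec_left: "bil M (A *v x) y = bil (transpose A ** M) x y"
  by (simp add: bil_def mat2_simps ring_distribs ac_simps)

lemma bil_axis:
  "bil M z (axis 1 1) = (transpose M *v z)$1" "bil M z (axis 2 1) = (transpose M *v z)$2"
  by (simp_all add: bil_def axis_def matrix_vector_mult_def sum_2 transpose_def ac_simps)

lemma bil_hscale: "bil (hscale c M) x y = bil M (c *s x) y"
  by (simp add: bil_def hscale_nth ring_distribs ac_simps)

lemma bil_eqI: "(\<And>x y. bil M x y = bil N x y) \<Longrightarrow> M = N"
proof -
  assume h: "\<And>x y. bil M x y = bil N x y"
  have "M $ i $ j = N $ i $ j" for i j
    using h[of "axis i 1" "axis j 1"] exhaust_2[of i] exhaust_2[of j]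
    by (auto simp: bil_def axis_def)
  then show ?thesis by (simp add: vec_eq_iff)
qed

lemma span_withE:
  assumes "y \<in> span_with R sc S"
  obtains T c where "finite T" "T \<subseteq> S" "\<forall>x\<in>T. c x \<in> R" "y = (\<Sum>x\<in>T. sc (c x) x)"
  using assms unfolding span_with_def by blast

lemma span_with_mem: "a \<in> S \<Longrightarrow> r \<in> R \<Longrightarrow> sc r a \<in> span_with R sc S"
  unfolding span_with_def by (rule CollectI, rule exI[of _ "{a}"], rule exI[of _ "\<lambda>_. r"]) auto

lemma span_with_singletonD: "y \<in> span_with R sc {a} \<Longrightarrow> y = 0 \<or> (\<exists>c\<in>R. y = sc c a)"
proof -
  assume "y \<in> span_with R sc {a}"
  then obtain T c where T: "finite T" "T \<subseteq> {a}" "\<forall>x\<in>T. c x \<in> R" "y = (\<Sum>x\<in>T. sc (c x) x)"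
    by (rule span_withE)
  then have "T = {} \<or> T = {a}" by blast
  then show ?thesis using T by auto
qed

lemma span_with_least:
  assumes "0 \<in> X" "\<And>x y. x \<in> X \<Longrightarrow> y \<in> X \<Longrightarrow> x + y \<in> X"
    "\<And>r x. r \<in> R \<Longrightarrow> x \<in> X \<Longrightarrow> sc r x \<in> X" "S \<subseteq> X"
  shows "span_with R sc S \<subseteq> X"
proof
  fix y assume "y \<in> span_with R sc S"
  then obtain T c where T: "finite T" "T \<subseteq> S" "\<forall>x\<in>T. c x \<in> R" "y = (\<Sum>x\<in>T. sc (c x) x)"
    by (rule span_withE)
  have "(\<Sum>x\<in>T. sc (c x) x) \<in> X" using T(1,2,3)
    by (induction T rule: finite_induct) (use assms in auto)
  then show "y \<in> X" using T(4) by simp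
qed

lemma span_with_add:
  assumes sc_add: "\<And>a c x. sc (a + c) x = sc a x + sc c x" and sc_zero: "\<And>x. sc 0 x = 0"
    and R: "0 \<in> R" "\<And>a c. a \<in> R \<Longrightarrow> c \<in> R \<Longrightarrow> a + c \<in> R"
    and y: "y1 \<in> span_with R sc S" "y2 \<in> span_with R sc S"
  shows "y1 + y2 \<in> span_with R sc S"
proof -
  obtain T1 c1 where T1: "finite T1" "T1 \<subseteq> S" "\<forall>x\<in>T1. c1 x \<in> R" "y1 = (\<Sum>x\<in>T1. sc (c1 x) x)"
    using y(1) by (rule span_withE)
  obtain T2 c2 where T2: "finite T2" "T2 \<subseteq> S" "\<forall>x\<in>T2. c2 x \<in> R" "y2 = (\<Sum>x\<in>T2. sc (c2 x) x)"
    using y(2) by (rule span_withE)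
  define c where "c x = (if x \<in> T1 then c1 x else 0) + (if x \<in> T2 then c2 x else 0)" for x
  have "(\<Sum>x\<in>T1 \<union> T2. sc (if x \<in> Ti then ci x else 0) x) = (\<Sum>x\<in>Ti. sc (ci x) x)"
    if "Ti \<subseteq> T1 \<union> T2" for Ti ci
    by (subst sum.mono_neutral_right[OF _ that]) (use T1(1) T2(1) in \<open>auto simp: sc_zero\<close>)
  then have "y1 + y2 = (\<Sum>x\<in>T1 \<union> T2. sc (c x) x)"
    using T1(4) T2(4) by (simp add: c_def sc_add sum.distrib)
  moreover have "\<forall>x\<in>T1 \<union> T2. c x \<in> R" using T1(3) T2(3) R by (auto simp: c_def)
  ultimately show ?thesis
    unfolding span_with_def using T1(1,2) T2(1,2) by blast
qed

lemma span_with_add_matrix: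
  fixes R :: "'a::comm_ring_1 set"
  assumes "0 \<in> R" "\<And>a c. a \<in> R \<Longrightarrow> c \<in> R \<Longrightarrow> a + c \<in> R"
  shows "y1 \<in> span_with R hscale S \<Longrightarrow> y2 \<in> span_with R hscale S \<Longrightarrow> y1 + y2 \<in> span_with R hscale S"
  by (rule span_with_add[OF hscale_add hscale_zero]) (use assms in auto)

lemma span_with_add_vector:
  fixes R :: "'a::comm_ring_1 set"
  assumes "0 \<in> R" "\<And>a c. a \<in> R \<Longrightarrow> c \<in> R \<Longrightarrow> a + c \<in> R"
  shows "y1 \<in> span_with R (*s) S \<Longrightarrow> y2 \<in> span_with R (*s) S \<Longrightarrow> y1 + y2 \<in> span_with R (*s) S"
  by (rule span_with_add[of "(*s)"]) (use assms in \<open>auto simp: vector_sadd_rdistrib\<close>)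

section \<open>Integral matrices and lattices with a basis\<close>

lemma End_lat_smult_preimage:
  assumes "c \<noteq> 0"
  shows "End_lat {y. c *s y \<in> L} = End_lat (L::('a::field^2) set)"
proof (intro set_eqI iffI)
  fix \<sigma> assume s: "\<sigma> \<in> End_lat {y. c *s y \<in> L}"
  have "\<sigma> *v x \<in> L" if "x \<in> L" for x
  proof -
    have "inverse c *s x \<in> {y. c *s y \<in> L}" using that assms by simp
    then have "\<sigma> *v (inverse c *s x) \<in> {y. c *s y \<in> L}" using s unfolding End_lat_def by blast
    then show ?thesis using assms by (simp add: mat_vec_smult)
  qed
  then show "\<sigma> \<in> End_lat L" unfolding End_lat_def by blast
next
  fix \<sigma> assume "\<sigma> \<in> End_lat L"
  then show "\<sigma> \<in> End_lat {y. c *s y \<in> L}"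
    unfolding End_lat_def by (auto simp: mat_vec_smult)
qed

context valued_field
begin

definition integral_vec :: "'a^2 \<Rightarrow> bool" where
  "integral_vec x \<longleftrightarrow> (\<forall>i. x$i \<in> \<O>)"

definition integral_mat :: "'a^2^2 \<Rightarrow> bool" where
  "integral_mat M \<longleftrightarrow> (\<forall>i j. M$i$j \<in> \<O>)"

definition unimodular :: "'a^2^2 \<Rightarrow> bool" where
  "unimodular M \<longleftrightarrow> integral_mat M \<and> det M \<noteq> 0 \<and> v (det M) = 0"

lemma integral_vec_iff: "integral_vec x \<longleftrightarrow> x$1 \<in> \<O> \<and> x$2 \<in> \<O>"
  by (auto simp: integral_vec_def forall_2)

lemma integral_mat_iff:
  "integral_mat M \<longleftrightarrow> M$1$1 \<in> \<O> \<and> M$1$2 \<in> \<O> \<and> M$2$1 \<in> \<O> \<and> M$2$2 \<in> \<O>"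
  by (auto simp: integral_mat_def forall_2)

lemma integral_mat_vec: "integral_mat M \<Longrightarrow> integral_vec x \<Longrightarrow> integral_vec (M *v x)"
  by (simp add: integral_mat_iff integral_vec_iff matrix_vector_mult_def sum_2 val_ring_add val_ring_mult)

lemma integral_mat_mult: "integral_mat M \<Longrightarrow> integral_mat N \<Longrightarrow> integral_mat (M ** N)"
  by (simp add: integral_mat_iff matrix_matrix_mult_def sum_2 val_ring_add val_ring_mult)

lemma integral_vec_add: "integral_vec x \<Longrightarrow> integral_vec y \<Longrightarrow> integral_vec (x + y)"
  by (simp add: integral_vec_iff val_ring_add)

lemma integral_vec_smult: "c \<in> \<O> \<Longrightarrow> integral_vec x \<Longrightarrow> integral_vec (c *s x)"
  by (simp add: integral_vec_iff val_ring_mult)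

lemma integral_vec_axis: "integral_vec (axis i 1)"
  by (simp add: integral_vec_def axis_def)

lemma integral_mat_one: "integral_mat (mat 1)"
  by (simp add: integral_mat_iff mat_def)

lemma integral_mat_zero: "integral_mat 0"
  by (simp add: integral_mat_def)

lemma integral_mat_add: "integral_mat A \<Longrightarrow> integral_mat B \<Longrightarrow> integral_mat (A + B)"
  by (simp add: integral_mat_def val_ring_add)

lemma integral_mat_hscale: "c \<in> \<O> \<Longrightarrow> integral_mat A \<Longrightarrow> integral_mat (hscale c A)"
  by (simp add: integral_mat_def hscale_nth val_ring_mult)

lemma integral_mat_transpose: "integral_mat A \<Longrightarrow> integral_mat (transpose A)"
  by (simp add: integral_mat_def transpose_def)

lemma integral_mat_mat_unit: "integral_mat (mat_unit i j)"
  by (simp add: integral_mat_def)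

lemma bil_integral: "integral_mat M \<Longrightarrow> integral_vec x \<Longrightarrow> integral_vec y \<Longrightarrow> bil M x y \<in> \<O>"
  by (simp add: bil_def integral_mat_iff integral_vec_iff val_ring_add val_ring_mult)

lemma integral_mat_of_columns: "(\<And>j. integral_vec (M *v axis j 1)) \<Longrightarrow> integral_mat M"
  unfolding integral_mat_def integral_vec_def by (metis mat_vec_axis)

lemma integral_mat_mat2_inv:
  assumes "unimodular M"
  shows "integral_mat (mat2_inv M)"
proof -
  have "inverse (det M) \<in> \<O>" using assms v_inverse by (simp add: unimodular_def val_ring_iff)
  then have "x / det M \<in> \<O>" if "x \<in> \<O>" for x using val_ring_mult[OF that] by (simp add: divide_inverse)
  then show ?thesis using assms by (simp add: unimodular_def integral_mat_iff mat2_inv_nth val_ring_minus)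
qed

lemma integral_pairing_unimodular_iff:
  assumes G: "unimodular G"
  shows "(\<forall>x. integral_vec x \<longrightarrow> bil G z x \<in> \<O>) \<longleftrightarrow> integral_vec z"
proof
  assume h: "\<forall>x. integral_vec x \<longrightarrow> bil G z x \<in> \<O>"
  have "integral_vec (transpose G *v z)"
    using h[rule_format, OF integral_vec_axis[of 1]] h[rule_format, OF integral_vec_axis[of 2]]
    by (simp add: bil_axis integral_vec_iff)
  moreover have "transpose (mat2_inv G) ** transpose G = mat 1"
    using G mat2_inv_right[of G] by (metis unimodular_def matrix_transpose_mul transpose_mat)
  ultimately show "integral_vec z"
    using integral_mat_vec[OF integral_mat_transpose[OF integral_mat_mat2_inv[OF G]]]
    by (metis matrix_vector_mul_assoc matrix_vector_mul_lid)
qed (use G bil_integral in \<open>auto simp: unimodular_def\<close>)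

lemma det_integral: "(\<And>i j. (M::'a^'n^'n) $ i $ j \<in> \<O>) \<Longrightarrow> det M \<in> \<O>"
  unfolding det_def by (intro val_ring_sum val_ring_mult val_ring_of_int val_ring_prod) auto

definition lattice_of :: "'a^2^2 \<Rightarrow> ('a^2) set" where
  "lattice_of P = {P *v x | x. integral_vec x}"

lemma lattice_of_add: "x \<in> lattice_of P \<Longrightarrow> y \<in> lattice_of P \<Longrightarrow> x + y \<in> lattice_of P"
proof -
  assume "x \<in> lattice_of P" "y \<in> lattice_of P"
  then obtain x' y' where "integral_vec x'" "x = P *v x'" "integral_vec y'" "y = P *v y'"
    unfolding lattice_of_def by blast
  then have "integral_vec (x' + y')" "x + y = P *v (x' + y')"
    by (simp_all add: integral_vec_add matrix_vector_right_distrib)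
  then show ?thesis unfolding lattice_of_def by blast
qed

lemma lattice_of_smult: "c \<in> \<O> \<Longrightarrow> x \<in> lattice_of P \<Longrightarrow> c *s x \<in> lattice_of P"
  unfolding lattice_of_def by (auto simp flip: mat_vec_smult intro: integral_vec_smult)

lemma zero_in_lattice_of: "0 \<in> lattice_of P"
  unfolding lattice_of_def by (rule CollectI, rule exI[of _ 0]) (simp add: integral_vec_def)

lemma column_in_lattice_of: "P *v axis j 1 \<in> lattice_of P"
  unfolding lattice_of_def using integral_vec_axis by blast

lemma End_lattice_of:
  assumes "det P \<noteq> 0"
  shows "End_lat (lattice_of P) = {\<sigma>. integral_mat (mat2_inv P ** \<sigma> ** P)}"
proof (intro set_eqI iffI)
  fix \<sigma> assume s: "\<sigma> \<in> End_lat (lattice_of P)"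
  have "integral_vec ((mat2_inv P ** \<sigma> ** P) *v axis j 1)" for j
  proof -
    have "\<sigma> *v (P *v axis j 1) \<in> lattice_of P"
      using s column_in_lattice_of unfolding End_lat_def by blast
    then obtain y where y: "integral_vec y" "\<sigma> *v (P *v axis j 1) = P *v y"
      unfolding lattice_of_def by blast
    have "(mat2_inv P ** \<sigma> ** P) *v axis j 1 = mat2_inv P *v (\<sigma> *v (P *v axis j 1))"
      by (simp add: matrix_vector_mul_assoc matrix_mul_assoc)
    then show ?thesis using y assms by (simp add: mat2_inv_cancel_left')
  qed
  then show "\<sigma> \<in> {\<sigma>. integral_mat (mat2_inv P ** \<sigma> ** P)}" using integral_mat_of_columns by blast
next
  fix \<sigma> assume s: "\<sigma> \<in> {\<sigma>. integral_mat (mat2_inv P ** \<sigma> ** P)}"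
  have "\<sigma> *v (P *v x) = P *v ((mat2_inv P ** \<sigma> ** P) *v x)" for x
    using assms by (simp add: matrix_vector_mul_assoc mat2_inv_right matrix_mul_assoc)
  then show "\<sigma> \<in> End_lat (lattice_of P)"
    unfolding End_lat_def lattice_of_def using integral_mat_vec s by auto
qed

lemma lattice_of_mult_unimodular:
  assumes "det Q \<noteq> 0" "integral_mat Q" "integral_mat (mat2_inv Q)"
  shows "lattice_of (P ** Q) = lattice_of P"
proof (intro set_eqI iffI)
  fix y assume "y \<in> lattice_of (P ** Q)"
  then obtain x where "integral_vec x" "y = P *v (Q *v x)"
    unfolding lattice_of_def by (auto simp: matrix_vector_mul_assoc)
  then show "y \<in> lattice_of P"
    unfolding lattice_of_def using assms(2) integral_mat_vec by blast
next
  fix y assume "y \<in> lattice_of P"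
  then obtain x where x: "integral_vec x" "y = P *v x" unfolding lattice_of_def by blast
  then have "y = (P ** Q) *v (mat2_inv Q *v x)"
    using assms(1) by (simp add: mat2_inv_cancel_left flip: matrix_vector_mul_assoc)
  then show "y \<in> lattice_of (P ** Q)"
    unfolding lattice_of_def using integral_mat_vec[OF assms(3) x(1)] by blast
qed

lemma o_lattice_lattice_of:
  assumes "det P \<noteq> 0"
  shows "o_lattice v (*s) (lattice_of P)"
proof -
  define S where "S = {P *v axis 1 1, P *v axis 2 1}"
  have add_O: "y1 \<in> span_with \<O> (*s) S \<Longrightarrow> y2 \<in> span_with \<O> (*s) S \<Longrightarrow> y1 + y2 \<in> span_with \<O> (*s) S"
    for y1 y2 by (rule span_with_add_vector) (auto intro: val_ring_add)
  have add_F: "y1 \<in> span_with UNIV (*s) L \<Longrightarrow> y2 \<in> span_with UNIV (*s) L \<Longrightarrow> y1 + y2 \<in> span_with UNIV (*s) L"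
    for y1 y2 and L :: "('a^2) set" by (rule span_with_add_vector) auto
  have span_O: "lattice_of P = span_with \<O> (*s) S"
  proof
    show "lattice_of P \<subseteq> span_with \<O> (*s) S"
    proof
      fix y assume "y \<in> lattice_of P"
      then obtain x where x: "integral_vec x" "y = P *v x" unfolding lattice_of_def by blast
      have "x$j *s (P *v axis j 1) \<in> span_with \<O> (*s) S" for j
        using span_with_mem[of "P *v axis j 1" S "x$j" \<O> "(*s)"] x(1) exhaust_2[of j]
        by (auto simp: S_def integral_vec_def)
      then show "y \<in> span_with \<O> (*s) S" using x(2) mat_vec_expand[of P x] add_O by metis
    qed
    show "span_with \<O> (*s) S \<subseteq> lattice_of P"
      by (rule span_with_least)
        (auto simp: S_def zero_in_lattice_of lattice_of_add lattice_of_smult column_in_lattice_of)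
  qed
  have "y \<in> span_with UNIV (*s) (lattice_of P)" for y
  proof -
    define x where "x = mat2_inv P *v y"
    have "x$j *s (P *v axis j 1) \<in> span_with UNIV (*s) (lattice_of P)" for j
      using span_with_mem[of "P *v axis j 1" "lattice_of P" "x$j" UNIV "(*s)"] column_in_lattice_of
      by blast
    moreover have "y = P *v x" using assms by (simp add: x_def mat2_inv_cancel_left)
    ultimately show ?thesis using mat_vec_expand[of P x] add_F by metis
  qed
  then have "span_with UNIV (*s) (lattice_of P) = UNIV" by blast
  then show ?thesis unfolding o_lattice_def using span_O by (intro conjI exI[of _ S]) (simp_all add: S_def)
qed

end

definition form_matrix :: "('a::field^2 \<Rightarrow> 'a^2 \<Rightarrow> 'a) \<Rightarrow> 'a^2^2" where
  "form_matrix b = (\<chi> i j. b (axis i 1) (axis j 1))"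

definition gram :: "('a::field^2 \<Rightarrow> 'a^2 \<Rightarrow> 'a) \<Rightarrow> 'a^2^2 \<Rightarrow> 'a^2^2" where
  "gram b P = transpose P ** form_matrix b ** P"

lemma gram_mult: "gram b (P ** Q) = transpose Q ** gram b P ** Q"
  by (simp add: gram_def matrix_transpose_mul matrix_mul_assoc)

lemma det_gram: "det (gram b P) = (det P)\<^sup>2 * det (form_matrix b)"
  by (simp add: gram_def det_mul det_transpose power2_eq_square)

locale quaternion_setting = valued_field v for v :: "'a::field_char_0 \<Rightarrow> int" +
  fixes dg :: "'a^2^2 \<Rightarrow> 'a^2^2" and b :: "'a^2 \<Rightarrow> 'a^2 \<Rightarrow> 'a"
  assumes orthogonal_involution: "orthogonal_involution dg"
    and adapted_form: "adapted_form dg b"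
begin

lemma form_add_left: "b (x + y) z = b x z + b y z"
  and form_smult_left: "b (c *s x) z = c * b x z"
  and form_sym: "b x y = b y x"
  and form_nondegenerate: "(\<And>w. b x w = 0) \<Longrightarrow> x = 0"
  and form_adjoint: "b x (\<sigma> *v y) = b (dg \<sigma> *v x) y"
  using adapted_form unfolding adapted_form_def by metis+

lemma form_add_right: "b z (x + y) = b z x + b z y"
  using form_add_left form_sym by metis

lemma form_smult_right: "b z (c *s x) = c * b z x"
  using form_smult_left form_sym by metis

lemma form_eq_bil: "b x y = bil (form_matrix b) x y"
proof -
  have "b x y = b (x$1 *s axis 1 1 + x$2 *s axis 2 1) (y$1 *s axis 1 1 + y$2 *s axis 2 1)"
    by (rule arg_cong2[where f = b]; simp add: vec_eq_iff forall_2 axis_def)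
  also have "\<dots> = bil (form_matrix b) x y"
    unfolding form_add_left form_add_right form_smult_left form_smult_right bil_def form_matrix_def
      vec_lambda_beta
    by (simp add: ring_distribs ac_simps)
  finally show ?thesis .
qed

lemma form_matrix_symmetric: "transpose (form_matrix b) = form_matrix b"
  by (simp add: form_matrix_def transpose_def vec_eq_iff form_sym)

lemma form_mat_vec: "b (P *v x) (P *v y) = bil (gram b P) x y"
  by (simp add: form_eq_bil gram_def bil_mat_vec_left bil_mat_vec_right matrix_mul_assoc)

lemma gram_symmetric: "gram b P $ 2 $ 1 = gram b P $ 1 $ 2"
proof -
  have "transpose (gram b P) = gram b P"
    by (simp add: gram_def matrix_transpose_mul form_matrix_symmetric matrix_mul_assoc)
  from arg_cong[OF this, of "\<lambda>M. M$1$2"] show ?thesis by (simp add: transpose_def)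
qed

lemma form_matrix_adjoint: "form_matrix b ** \<sigma> = transpose (dg \<sigma>) ** form_matrix b"
  by (rule bil_eqI) (metis form_adjoint form_eq_bil bil_mat_vec_left bil_mat_vec_right)

lemma gram_adjoint:
  assumes "det P \<noteq> 0"
  shows "gram b P ** (mat2_inv P ** \<sigma> ** P) = transpose (mat2_inv P ** dg \<sigma> ** P) ** gram b P"
proof (rule bil_eqI)
  fix x y
  have conj: "P *v ((mat2_inv P ** \<tau> ** P) *v z) = \<tau> *v (P *v z)" for \<tau> z
    using assms by (simp add: matrix_vector_mul_assoc mat2_inv_right matrix_mul_assoc)
  let ?C = "mat2_inv P ** \<sigma> ** P" and ?C' = "mat2_inv P ** dg \<sigma> ** P"
  have "bil (gram b P ** ?C) x y = b (P *v x) (P *v (?C *v y))"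
    by (simp add: bil_mat_vec_right form_mat_vec)
  also have "\<dots> = b (P *v x) (\<sigma> *v (P *v y))" by (simp only: conj)
  also have "\<dots> = b (dg \<sigma> *v (P *v x)) (P *v y)" by (rule form_adjoint)
  also have "\<dots> = b (P *v (?C' *v x)) (P *v y)" by (simp only: conj)
  also have "\<dots> = bil (transpose ?C' ** gram b P) x y"
    by (simp add: bil_mat_vec_left form_mat_vec)
  finally show "bil (gram b P ** (mat2_inv P ** \<sigma> ** P)) x y
      = bil (transpose (mat2_inv P ** dg \<sigma> ** P) ** gram b P) x y" .
qed

lemma det_form_matrix_nonzero: "det (form_matrix b) \<noteq> 0"
proof
  assume d0: "det (form_matrix b) = 0"
  let ?B = "form_matrix b"
  have s: "?B$2$1 = ?B$1$2" by (simp add: form_matrix_def form_sym)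
  define x :: "'a^2" where "x = (\<chi> i. if i = 1 then ?B$1$2 else - ?B$1$1)"
  have "b x w = 0" for w
    using d0 s by (simp add: form_eq_bil bil_def x_def det_2 algebra_simps)
  then have "x = 0" by (rule form_nondegenerate)
  then have z1: "?B$1$2 = 0" "?B$1$1 = 0" by (auto simp: x_def vec_eq_iff forall_2)
  define y :: "'a^2" where "y = (\<chi> i. if i = 1 then ?B$2$2 else 0)"
  have "b y w = 0" for w
    using z1 s by (simp add: form_eq_bil bil_def y_def)
  then have "y = 0" by (rule form_nondegenerate)
  then have "?B$2$2 = 0" by (auto simp: y_def vec_eq_iff forall_2)
  then have "b (axis 1 1) w = 0" for w
    using z1 s by (simp add: form_eq_bil bil_def axis_def)
  then have "axis 1 (1::'a) = (0::'a^2)" by (rule form_nondegenerate)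
  then show False by (simp add: axis_eq_0_iff)
qed

lemma det_gram_nonzero: "det P \<noteq> 0 \<Longrightarrow> det (gram b P) \<noteq> 0"
  by (simp add: det_gram det_form_matrix_nonzero)

lemma dg_add: "dg (A + B) = dg A + dg B"
  and dg_hscale: "dg (hscale c A) = hscale c (dg A)"
  and dg_dg: "dg (dg A) = A"
  and dg_not_id: "dg \<noteq> id"
  using orthogonal_involution unfolding orthogonal_involution_def by metis+

lemma dg_diff: "dg (A - B) = dg A - dg B"
  using dg_add[of A "- B"] dg_hscale[of "-1" B] by (simp add: hscale_minus_one)

definition skew_elt :: "'a^2^2" where
  "skew_elt = (SOME h. h \<noteq> 0 \<and> dg h = - h)"

lemma skew_elt: "skew_elt \<noteq> 0" "dg skew_elt = - skew_elt"
proof -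
  obtain A where A: "dg A \<noteq> A" using dg_not_id by (metis eq_id_iff)
  have "A - dg A \<noteq> 0 \<and> dg (A - dg A) = - (A - dg A)" using A by (simp add: dg_diff dg_dg)
  then have "\<exists>h. h \<noteq> 0 \<and> dg h = - h" by blast
  then have "skew_elt \<noteq> 0 \<and> dg skew_elt = - skew_elt" unfolding skew_elt_def by (rule someI_ex)
  then show "skew_elt \<noteq> 0" "dg skew_elt = - skew_elt" by auto
qed

lemma disc_inv_eq: "disc_inv dg = {det skew_elt * c\<^sup>2 | c. c \<noteq> 0}"
  by (simp add: disc_inv_def skew_elt_def Let_def)

text \<open>The matrix form_matrix b ** skew_elt is alternating, so its determinant is a
  nonzero square.\<close>

lemma det_form_matrix_skew_square: "\<exists>k. k \<noteq> 0 \<and> det (form_matrix b) * det skew_elt = k\<^sup>2"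
proof -
  define K where "K = form_matrix b ** skew_elt"
  have "transpose K = transpose skew_elt ** form_matrix b"
    unfolding K_def by (simp add: matrix_transpose_mul form_matrix_symmetric)
  moreover have "K = - (transpose skew_elt ** form_matrix b)"
    unfolding K_def form_matrix_adjoint skew_elt(2)
    by (simp add: vec_eq_iff matrix_matrix_mult_def transpose_def sum_negf)
  ultimately have alt: "transpose K = - K" by simp
  have K: "K$1$1 = 0" "K$2$2 = 0" "K$2$1 = - K$1$2"
    using arg_cong[OF alt, of "\<lambda>M. M$1$1"] arg_cong[OF alt, of "\<lambda>M. M$2$2"]
      arg_cong[OF alt, of "\<lambda>M. M$1$2"]
    by (simp_all add: transpose_def)
  have "K$1$2 \<noteq> 0"
  proof
    assume "K$1$2 = 0"
    then have "K = 0" using K by (simp add: vec_eq_iff forall_2)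
    moreover have "mat2_inv (form_matrix b) ** K = skew_elt"
      unfolding K_def using det_form_matrix_nonzero by (simp add: matrix_mul_assoc mat2_inv_left)
    ultimately show False using skew_elt(1) by (simp add: vec_eq_iff matrix_matrix_mult_def)
  qed
  moreover have "det K = (K$1$2)\<^sup>2" using K by (simp add: det_2 power2_eq_square)
  ultimately show ?thesis unfolding K_def det_mul by blast
qed

lemma det_skew_elt_nonzero: "det skew_elt \<noteq> 0"
  using det_form_matrix_skew_square by auto

end

section \<open>The discriminant of the involution\<close>

context valued_field
begin

lemma v_prime_elt_minus_square:
  assumes l: "l \<noteq> 0" "v l = 1"
  shows "- l - \<xi>\<^sup>2 \<noteq> 0 \<and> v (- l - \<xi>\<^sup>2) \<le> 1"
proof (cases "\<xi> = 0")
  case True then show ?thesis using l by (simp add: v_minus)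
next
  case False
  have \<xi>2: "\<xi>\<^sup>2 \<noteq> 0" "v (\<xi>\<^sup>2) = 2 * v \<xi>" using False v_power[of \<xi> 2] by auto
  show ?thesis
  proof (cases "1 \<le> v \<xi>")
    case True
    then have "v (- l) < v (\<xi>\<^sup>2)" using \<xi>2 l by (simp add: v_minus)
    then show ?thesis using v_diff_strict[of "- l" "\<xi>\<^sup>2"] l \<xi>2 by (simp add: v_minus)
  next
    case False
    then have "v (- (\<xi>\<^sup>2)) < v (- l)" using \<xi>2 l by (simp add: v_minus)
    then have "- (\<xi>\<^sup>2) + - l \<noteq> 0 \<and> v (- (\<xi>\<^sup>2) + - l) = v (- (\<xi>\<^sup>2))"
      using v_add_strict[of "- (\<xi>\<^sup>2)" "- l"] l \<xi>2 by simp
    moreover have "- l - \<xi>\<^sup>2 = - (\<xi>\<^sup>2) + - l" by simp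
    ultimately have "- l - \<xi>\<^sup>2 \<noteq> 0 \<and> v (- l - \<xi>\<^sup>2) = v (\<xi>\<^sup>2)" by (simp only: v_minus simp_thms)
    then show ?thesis using \<xi>2 False by simp
  qed
qed

lemma quad_defect_of_prime_elt:
  assumes l: "l \<noteq> 0" "v l = 1"
  shows "quad_defect v (- l) = max_ideal v"
proof (rule set_eqI, rule iffI)
  fix y assume "y \<in> quad_defect v (- l)"
  then have "y \<in> {(- l - 0\<^sup>2) * r | r. r \<in> \<O>}" unfolding quad_defect_def by blast
  then obtain r where r: "r \<in> \<O>" "y = (- l) * r" by auto
  then show "y \<in> max_ideal v"
    using l by (cases "r = 0") (auto simp: max_ideal_def vball_iff val_ring_iff v_mult v_minus)
next
  fix y assume y: "y \<in> max_ideal v"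
  have "\<exists>r\<in>\<O>. y = (- l - \<xi>\<^sup>2) * r" for \<xi>
  proof (cases "y = 0")
    case False
    define w where "w = - l - \<xi>\<^sup>2"
    have w: "w \<noteq> 0" "v w \<le> 1" using v_prime_elt_minus_square[OF l] by (simp_all add: w_def)
    then have "y / w \<in> \<O>" using val_ring_divide[of y w] y False by (simp add: max_ideal_def vball_iff)
    moreover have "y = w * (y / w)" using w by simp
    ultimately show ?thesis unfolding w_def by blast
  qed (auto intro: bexI[of _ 0])
  then show "y \<in> quad_defect v (- l)" unfolding quad_defect_def by blast
qed

end

context quaternion_setting
begin

lemma disc_inv_mult_square: "x \<in> disc_inv dg \<Longrightarrow> c \<noteq> 0 \<Longrightarrow> x * c\<^sup>2 \<in> disc_inv dg"
proof -
  assume "x \<in> disc_inv dg" "c \<noteq> 0"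
  then obtain d where "d \<noteq> 0" "x = det skew_elt * d\<^sup>2" by (auto simp: disc_inv_eq)
  then have "d * c \<noteq> 0 \<and> x * c\<^sup>2 = det skew_elt * (d * c)\<^sup>2"
    using \<open>c \<noteq> 0\<close> by (simp add: power_mult_distrib)
  then show ?thesis unfolding disc_inv_eq by blast
qed

text \<open>Dividing lam by an even power of \<pi> gives an element of disc_inv dg of valuation
  v lam mod 2; since lam generates iota, that valuation is at least v lam.  A normalized
  discriminant of valuation 1 is excluded by the quadratic defect hypothesis.\<close>

lemma normalized_disc_is_unit:
  assumes lam: "lam \<in> disc_inv dg \<inter> \<O>" "ideal_gen v {lam} = iota v (disc_inv dg)"
    and defect: "quad_defect v (- lam) \<noteq> max_ideal v"
  shows "lam \<noteq> 0 \<and> v lam = 0"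
proof -
  have lam_nz: "lam \<noteq> 0" using lam(1) det_skew_elt_nonzero by (auto simp: disc_inv_eq)
  define q where "q = v lam div 2"
  define u where "u = lam * (\<pi> powi (- q))\<^sup>2"
  have u_nz: "u \<noteq> 0" using lam_nz uniformizer_powi_nonzero by (simp add: u_def)
  have "v u = v lam - 2 * q"
    using lam_nz uniformizer_powi_nonzero by (simp add: u_def v_mult v_power v_uniformizer_powi)
  then have vu: "v u = v lam mod 2" by (simp add: q_def minus_mult_div_eq_mod)
  have "u \<in> disc_inv dg \<inter> \<O>"
    using disc_inv_mult_square[of lam "\<pi> powi (- q)"] lam(1) uniformizer_powi_nonzero vu
    by (simp add: u_def val_ring_iff)
  then have "u \<in> iota v (disc_inv dg)"
    unfolding iota_def ideal_gen_def using span_with_mem[of u _ 1 \<O> "(*)"] by simp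
  then have "u \<in> span_with \<O> (*) {lam}" using lam(2) by (simp add: ideal_gen_def)
  then obtain t where t: "t \<in> \<O>" "u = t * lam" using span_with_singletonD u_nz by blast
  then have "v u = v t + v lam" using u_nz lam_nz by (simp add: v_mult)
  moreover have "0 \<le> v t" using t u_nz by (auto simp: val_ring_iff)
  moreover have "0 \<le> v lam" using lam(1) lam_nz by (auto simp: val_ring_iff)
  ultimately have "v lam = 0 \<or> v lam = 1" using vu by auto
  then show ?thesis using quad_defect_of_prime_elt[OF lam_nz] defect lam_nz by auto
qed

lemma iota_disc_inv_eq_val_ring:
  assumes "lam \<noteq> 0" "v lam = 0" "ideal_gen v {lam} = iota v (disc_inv dg)"
  shows "iota v (disc_inv dg) = \<O>"
proof -
  have "span_with \<O> (*) {lam} = \<O>"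
  proof (intro set_eqI iffI)
    fix x assume "x \<in> span_with \<O> (*) {lam}"
    moreover have "lam \<in> \<O>" using assms val_ring_iff by simp
    ultimately show "x \<in> \<O>" using span_with_singletonD[of x \<O> "(*)" lam] val_ring_mult by auto
  next
    fix x assume x: "x \<in> \<O>"
    have "x / lam \<in> \<O>"
      using val_ring_divide[of x lam] x assms by (cases "x = 0") (auto simp: val_ring_iff)
    then have "(x / lam) * lam \<in> span_with \<O> (*) {lam}" by (rule span_with_mem[rotated]) simp
    then show "x \<in> span_with \<O> (*) {lam}" using assms by simp
  qed
  then show ?thesis using assms by (simp add: ideal_gen_def)
qed

lemma even_v_det_form_matrix:
  assumes "lam \<in> disc_inv dg" "v lam = 0"
  shows "even (v (det (form_matrix b)))"
proof -
  obtain c where c: "c \<noteq> 0" "lam = det skew_elt * c\<^sup>2" using assms(1) disc_inv_eq by auto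
  then have "v (det skew_elt) = - 2 * v c"
    using assms(2) det_skew_elt_nonzero by (simp add: v_mult v_power)
  moreover obtain k where "k \<noteq> 0" "det (form_matrix b) * det skew_elt = k\<^sup>2"
    using det_form_matrix_skew_square by blast
  then have "v (det (form_matrix b)) + v (det skew_elt) = 2 * v k"
    using det_form_matrix_nonzero det_skew_elt_nonzero by (metis v_mult v_power of_nat_numeral)
  ultimately show ?thesis by presburger
qed

end

section \<open>Every order stabilizes a lattice with a basis\<close>

context valued_field
begin

lemma exists_min_valuation:
  assumes "x0 \<in> A" "\<And>x. x \<in> A \<Longrightarrow> f x \<noteq> 0 \<and> f x \<in> \<O>"
  shows "\<exists>x\<in>A. \<forall>y\<in>A. v (f x) \<le> v (f y)"
proof -
  obtain x where x: "x \<in> A" "\<forall>y. y \<in> A \<longrightarrow> nat (v (f x)) \<le> nat (v (f y))"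
    using ex_has_least_nat[of "\<lambda>x. x \<in> A" x0 "\<lambda>x. nat (v (f x))"] assms(1) by blast
  have pos: "0 \<le> v (f y)" if "y \<in> A" for y using assms(2)[OF that] val_ring_iff by auto
  have "v (f x) \<le> v (f y)" if "y \<in> A" for y
    using x pos[OF x(1)] pos[OF that] that by fastforce
  then show ?thesis using x(1) by blast
qed

text \<open>Hermite normal form: a basis is formed by an element f of minimal first-coordinate
  valuation and an element g of the second axis of minimal valuation.\<close>

lemma submodule_eq_lattice_of:
  assumes add: "\<And>x y. x \<in> N \<Longrightarrow> y \<in> N \<Longrightarrow> x + y \<in> N"
    and smult: "\<And>c x. c \<in> \<O> \<Longrightarrow> x \<in> N \<Longrightarrow> c *s x \<in> N"
    and integral: "\<And>x. x \<in> N \<Longrightarrow> integral_vec x"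
    and x1: "x1 \<in> N" "x1$1 \<noteq> 0"
    and x2: "x2 \<in> N" "x2$1 = 0" "x2$2 \<noteq> 0"
  shows "\<exists>P. det P \<noteq> 0 \<and> lattice_of P = N"
proof -
  have "\<exists>f\<in>{x\<in>N. x$1 \<noteq> 0}. \<forall>y\<in>{x\<in>N. x$1 \<noteq> 0}. v (f$1) \<le> v (y$1)"
    by (rule exists_min_valuation[of x1]) (use x1 integral in \<open>auto simp: integral_vec_iff\<close>)
  then obtain f where f: "f \<in> N" "f$1 \<noteq> 0"
    and f_min: "\<And>y. y \<in> N \<Longrightarrow> y$1 \<noteq> 0 \<Longrightarrow> v (f$1) \<le> v (y$1)"
    by blast
  have "\<exists>g\<in>{x\<in>N. x$1 = 0 \<and> x$2 \<noteq> 0}. \<forall>y\<in>{x\<in>N. x$1 = 0 \<and> x$2 \<noteq> 0}. v (g$2) \<le> v (y$2)"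
    by (rule exists_min_valuation[of x2]) (use x2 integral in \<open>auto simp: integral_vec_iff\<close>)
  then obtain g where g: "g \<in> N" "g$1 = 0" "g$2 \<noteq> 0"
    and g_min: "\<And>y. y \<in> N \<Longrightarrow> y$1 = 0 \<Longrightarrow> y$2 \<noteq> 0 \<Longrightarrow> v (g$2) \<le> v (y$2)"
    by blast
  define P where "P = columns2 f g"
  have "lattice_of P = N"
  proof (intro set_eqI iffI)
    fix y assume "y \<in> lattice_of P"
    then obtain x where "integral_vec x" "y = P *v x" unfolding lattice_of_def by blast
    then show "y \<in> N" using add smult f g by (simp add: P_def columns2_mat_vec integral_vec_iff)
  next
    fix y assume y: "y \<in> N"
    define s where "s = y$1 / f$1"
    have s: "s \<in> \<O>"
      using val_ring_divide[of "y$1" "f$1"] f_min[OF y] f by (cases "y$1 = 0") (auto simp: s_def)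
    define z where "z = y + (- s) *s f"
    have z: "z \<in> N" "z$1 = 0"
      using add[OF y smult[OF val_ring_minus[OF s] f(1)]] f(2) by (simp_all add: z_def s_def)
    define t where "t = z$2 / g$2"
    have t: "t \<in> \<O>"
      using val_ring_divide[of "z$2" "g$2"] g_min[OF z] g by (cases "z$2 = 0") (auto simp: t_def)
    have "y = P *v (\<chi> i. if i = 1 then s else t)"
      using f g z(2) by (simp add: P_def columns2_mat_vec vec_eq_iff forall_2 t_def z_def s_def)
    moreover have "integral_vec (\<chi> i. if i = 1 then s else t)" using s t by (simp add: integral_vec_iff)
    ultimately show "y \<in> lattice_of P" unfolding lattice_of_def by blast
  qed
  moreover have "det P \<noteq> 0" using f g by (simp add: P_def det_columns2)
  ultimately show ?thesis by blast
qed

lemma span_hscale_bounded_denominators: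
  assumes "finite S"
  shows "\<exists>K\<ge>0. \<forall>\<sigma>\<in>span_with \<O> hscale S. integral_mat (hscale (\<pi> powi K) \<sigma>)"
proof -
  define E where "E = (\<lambda>(s, i, j). s $ i $ j) ` (S \<times> UNIV \<times> UNIV)"
  have fin: "finite E" unfolding E_def using assms by simp
  define K where "K = Max (insert 0 ((\<lambda>e. - v e) ` E))"
  have "K \<ge> 0" unfolding K_def using fin by simp
  have K: "\<pi> powi K * s $ i $ j \<in> \<O>" if "s \<in> S" for s i j
  proof (cases "s $ i $ j = 0")
    case False
    have "s $ i $ j \<in> E" unfolding E_def using that by (intro image_eqI[of _ _ "(s, i, j)"]) auto
    then have "- v (s $ i $ j) \<le> K" unfolding K_def using fin by simp
    then show ?thesis using False uniformizer_powi_nonzero by (simp add: v_mult v_uniformizer_powi val_ring_iff)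
  qed simp
  have "integral_mat (hscale (\<pi> powi K) \<sigma>)" if \<sigma>: "\<sigma> \<in> span_with \<O> hscale S" for \<sigma>
  proof -
    obtain T c where T: "finite T" "T \<subseteq> S" "\<forall>x\<in>T. c x \<in> \<O>" "\<sigma> = (\<Sum>x\<in>T. hscale (c x) x)"
      using \<sigma> by (rule span_withE)
    have "hscale (\<pi> powi K) \<sigma> $ i $ j = (\<Sum>x\<in>T. c x * (\<pi> powi K * x $ i $ j))" for i j
      by (simp add: T(4) hscale_def sum_distrib_left ac_simps)
    moreover have "(\<Sum>x\<in>T. c x * (\<pi> powi K * x $ i $ j)) \<in> \<O>" for i j
      by (rule val_ring_sum) (metis T(2,3) K val_ring_mult subsetD)
    ultimately show ?thesis unfolding integral_mat_def by simp
  qed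
  then show ?thesis using \<open>K \<ge> 0\<close> by blast
qed

text \<open>The order stabilizes N = {x integral. \<sigma> x integral for all \<sigma> in the order}, which
  contains \<pi>^K times the standard basis.\<close>

lemma order_subset_End_lattice_of:
  assumes "is_order v Ord"
  shows "\<exists>P. det P \<noteq> 0 \<and> Ord \<subseteq> End_lat (lattice_of P)"
proof -
  obtain S where S: "finite S" "Ord = span_with \<O> hscale S"
    using assms unfolding is_order_def o_lattice_def by blast
  have mult: "\<And>A B. A \<in> Ord \<Longrightarrow> B \<in> Ord \<Longrightarrow> A ** B \<in> Ord"
    using assms unfolding is_order_def by auto
  obtain K where K: "K \<ge> 0" "\<And>\<sigma>. \<sigma> \<in> Ord \<Longrightarrow> integral_mat (hscale (\<pi> powi K) \<sigma>)"
    using span_hscale_bounded_denominators[OF S(1)] S(2) by blast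
  define N where "N = {x. integral_vec x \<and> (\<forall>\<sigma>\<in>Ord. integral_vec (\<sigma> *v x))}"
  have basis: "(\<pi> powi K) *s axis i 1 \<in> N" for i
    using integral_mat_vec[OF K(2) integral_vec_axis[of i]]
      integral_vec_smult[OF val_ring_uniformizer_powi[OF K(1)] integral_vec_axis]
    by (simp add: N_def mat_vec_smult hscale_mat_vec)
  have add: "x + y \<in> N" if "x \<in> N" "y \<in> N" for x y
    using that by (simp add: N_def integral_vec_add matrix_vector_right_distrib)
  have smult: "c *s x \<in> N" if "c \<in> \<O>" "x \<in> N" for c x
    using that by (simp add: N_def integral_vec_smult mat_vec_smult)
  have integral: "integral_vec x" if "x \<in> N" for x using that by (simp add: N_def)
  have nonzero: "((\<pi> powi K) *s axis 1 1 :: 'a^2) $ 1 \<noteq> 0"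
    "((\<pi> powi K) *s axis 2 1 :: 'a^2) $ 1 = 0" "((\<pi> powi K) *s axis 2 1 :: 'a^2) $ 2 \<noteq> 0"
    using uniformizer_powi_nonzero by (simp_all add: axis_def)
  obtain P where P: "det P \<noteq> 0" "lattice_of P = N"
    using submodule_eq_lattice_of[OF add smult integral basis nonzero(1) basis nonzero(2,3)] by blast
  have "\<sigma> \<in> End_lat N" if "\<sigma> \<in> Ord" for \<sigma>
    using that mult by (auto simp: End_lat_def N_def matrix_vector_mul_assoc)
  then show ?thesis using P by blast
qed

end

section \<open>Modular bases: the Jordan splitting of a stable lattice\<close>

context valued_field
begin

lemma dominant_entry_cases:
  assumes "x * y \<noteq> z * z"
  shows "(x \<noteq> 0 \<and> z \<in> vball v (v x) \<and> y \<in> vball v (v x))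
    \<or> (y \<noteq> 0 \<and> z \<in> vball v (v y) \<and> x \<in> vball v (v y))
    \<or> (z \<noteq> 0 \<and> (x = 0 \<or> v z < v x) \<and> (y = 0 \<or> v z < v y))"
  using assms unfolding vball_iff by (cases "z = 0"; cases "x = 0"; cases "y = 0") auto

lemma unimodular_hscale:
  assumes "\<And>i j. G$i$j \<in> vball v m" "det G \<noteq> 0" "v (det G) = 2 * m"
  shows "unimodular (hscale (\<pi> powi (- m)) G)"
proof -
  have "integral_mat (hscale (\<pi> powi (- m)) G)"
    using vball_mult[OF uniformizer_powi_in_vball[of "- m"] assms(1)]
    by (simp add: integral_mat_def hscale_nth val_ring_eq_vball)
  moreover have "det (hscale (\<pi> powi (- m)) G) = (\<pi> powi (- m))\<^sup>2 * det G" by (rule det_hscale)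
  ultimately show ?thesis
    using assms(2,3) uniformizer_powi_nonzero
    by (simp add: unimodular_def v_mult v_power v_uniformizer_powi)
qed

lemma integral_mat_conj_diag2:
  assumes "k \<ge> 0" "integral_mat C" "C$1$2 \<in> vball v k"
  shows "integral_mat (mat2_inv (diag2 (\<pi> powi (- k))) ** C ** diag2 (\<pi> powi (- k)))"
proof -
  have "C$1$2 * \<pi> powi (- k) \<in> \<O>"
    using vball_mult[OF assms(3) uniformizer_powi_in_vball[of "- k"]] by (simp add: val_ring_eq_vball)
  moreover have "C$2$1 * \<pi> powi k \<in> \<O>"
    using assms(2) val_ring_mult val_ring_uniformizer_powi[OF assms(1)] by (simp add: integral_mat_iff)
  ultimately show ?thesis
    using assms(2) uniformizer(1) uniformizer_powi_nonzero[of k]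
    by (simp add: integral_mat_iff mat2_simps det_diag2 power_int_minus divide_inverse
        mult.commute[of "\<pi> powi k"] mult.assoc)
qed

end

context quaternion_setting
begin

definition modular_basis :: "'a^2^2 \<Rightarrow> int \<Rightarrow> bool" where
  "modular_basis P m \<longleftrightarrow> unimodular (hscale (\<pi> powi (- m)) (gram b P))"

lemma modular_basis_offdiagonal:
  assumes P: "det P \<noteq> 0" and G12: "gram b P $ 1 $ 2 \<noteq> 0"
    and G11: "gram b P $ 1 $ 1 = 0 \<or> v (gram b P $ 1 $ 2) < v (gram b P $ 1 $ 1)"
    and G22: "gram b P $ 2 $ 2 = 0 \<or> v (gram b P $ 1 $ 2) < v (gram b P $ 2 $ 2)"
  shows "modular_basis P (v (gram b P $ 1 $ 2))"
proof -
  define G where "G = gram b P"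
  define m where "m = v (G $ 1 $ 2)"
  have diag: "G$1$1 \<in> vball v (m + 1)" "G$2$2 \<in> vball v (m + 1)"
    using G11 G22 unfolding G_def m_def vball_iff by auto
  have sym: "G$2$1 = G$1$2" unfolding G_def by (rule gram_symmetric)
  have "G$i$j \<in> vball v m" for i j
    using exhaust_2[of i] exhaust_2[of j] diag sym self_in_vball[of "G$1$2"] vball_mono[of _ "m + 1" m]
    by (auto simp: m_def)
  moreover have "v (det G) = 2 * m"
  proof -
    have sq: "(G$1$2)\<^sup>2 \<noteq> 0" "v ((G$1$2)\<^sup>2) = 2 * m"
      using G12 v_power[of "G$1$2" 2] by (auto simp: m_def G_def)
    have "G$1$1 * G$2$2 \<in> vball v (2 * m + 1)"
      using vball_mult[OF diag(1) vball_mono[OF diag(2), of m]] by (simp add: algebra_simps)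
    moreover have "det G = - ((G$1$2)\<^sup>2) + G$1$1 * G$2$2"
      by (simp add: det_2 sym power2_eq_square)
    ultimately show ?thesis
      using v_add_strict[of "- ((G$1$2)\<^sup>2)" "G$1$1 * G$2$2"] sq
      by (cases "G$1$1 * G$2$2 = 0") (auto simp: v_minus vball_iff)
  qed
  ultimately show ?thesis
    using unimodular_hscale det_gram_nonzero[OF P] by (simp add: modular_basis_def G_def m_def)
qed

text \<open>This is where dg-stability enters: for the matrices C, C' of \<sigma> and dg \<sigma> in the basis
  P, the adjoint relation gives a C12 = C'21 \<beta>, which puts C12 into \<pi>^k \<O>.\<close>

lemma order_subset_End_rescaled:
  assumes P: "det P \<noteq> 0" and Ord: "Ord \<subseteq> End_lat (lattice_of P)" "dg ` Ord \<subseteq> Ord"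
    and G: "gram b P $ 1 $ 2 = 0" "gram b P $ 1 $ 1 \<noteq> 0"
      "v (gram b P $ 2 $ 2) = v (gram b P $ 1 $ 1) + 2 * k" "k \<ge> 0"
  shows "Ord \<subseteq> End_lat (lattice_of (P ** diag2 (\<pi> powi (- k))))"
proof
  fix \<sigma> assume \<sigma>: "\<sigma> \<in> Ord"
  define D where "D = diag2 (\<pi> powi (- k))"
  define C where "C = mat2_inv P ** \<sigma> ** P"
  define C' where "C' = mat2_inv P ** dg \<sigma> ** P"
  let ?a = "gram b P $ 1 $ 1" and ?\<beta> = "gram b P $ 2 $ 2"
  have D: "det D \<noteq> 0" using uniformizer_powi_nonzero by (simp add: D_def det_diag2)
  have C: "integral_mat C" "integral_mat C'"
    using Ord \<sigma> End_lattice_of[OF P] by (auto simp: C_def C'_def)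
  have "(gram b P ** C) $ 1 $ 2 = (transpose C' ** gram b P) $ 1 $ 2"
    unfolding C_def C'_def gram_adjoint[OF P] ..
  then have "?a * C$1$2 = C'$2$1 * ?\<beta>"
    using G(1) gram_symmetric[of P] by (simp add: mat2_simps)
  then have "C$1$2 = C'$2$1 * ?\<beta> / ?a" using G(2) by (simp add: field_simps)
  moreover have "C'$2$1 * ?\<beta> / ?a \<in> vball v (0 + v ?\<beta> - v ?a)"
    using C(2) G(2) by (intro vball_divide vball_mult self_in_vball) (simp add: integral_mat_def val_ring_eq_vball)
  ultimately have "C$1$2 \<in> vball v k" using G(3,4) vball_mono by simp
  then have "integral_mat (mat2_inv D ** C ** D)"
    using integral_mat_conj_diag2 G(4) C(1) by (simp add: D_def)
  moreover have "mat2_inv (P ** D) ** \<sigma> ** (P ** D) = mat2_inv D ** C ** D"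
    using P D by (simp add: C_def mat2_inv_mult matrix_mul_assoc)
  ultimately show "\<sigma> \<in> End_lat (lattice_of (P ** diag2 (\<pi> powi (- k))))"
    using End_lattice_of P D by (simp add: D_def det_mul)
qed

lemma modular_basis_rescaled:
  assumes P: "det P \<noteq> 0"
    and G: "gram b P $ 1 $ 2 = 0" "gram b P $ 1 $ 1 \<noteq> 0" "gram b P $ 2 $ 2 \<noteq> 0"
      "v (gram b P $ 2 $ 2) = v (gram b P $ 1 $ 1) + 2 * k"
  shows "modular_basis (P ** diag2 (\<pi> powi (- k))) (v (gram b P $ 1 $ 1))"
proof -
  let ?a = "gram b P $ 1 $ 1" and ?\<beta> = "gram b P $ 2 $ 2" and ?s = "\<pi> powi (- k)"
  define G' where "G' = gram b (P ** diag2 ?s)"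
  have G': "G'$1$1 = ?a" "G'$1$2 = 0" "G'$2$1 = 0" "G'$2$2 = ?\<beta> * (?s * ?s)"
    using G(1) gram_symmetric[of P] unfolding G'_def gram_mult by (simp_all add: mat2_simps)
  have \<beta>s: "?\<beta> * (?s * ?s) \<noteq> 0" "v (?\<beta> * (?s * ?s)) = v ?a"
    using G(3,4) uniformizer_powi_nonzero by (simp_all add: v_mult v_uniformizer_powi)
  have "G'$i$j \<in> vball v (v ?a)" for i j
    using exhaust_2[of i] exhaust_2[of j] G' \<beta>s self_in_vball[of ?a] self_in_vball[of "?\<beta> * (?s * ?s)"]
    by auto
  moreover have "det G' = ?a * (?\<beta> * (?s * ?s))" by (simp add: det_2 G')
  ultimately show ?thesis
    using unimodular_hscale[of G' "v ?a"] G(2) \<beta>s by (simp add: modular_basis_def G'_def v_mult)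
qed

lemma exists_diagonal_basis:
  assumes P: "det P \<noteq> 0"
    and G: "gram b P $ 1 $ 1 \<noteq> 0" "gram b P $ 1 $ 2 \<in> vball v (v (gram b P $ 1 $ 1))"
      "gram b P $ 2 $ 2 \<in> vball v (v (gram b P $ 1 $ 1))"
  obtains P1 where "det P1 \<noteq> 0" "lattice_of P1 = lattice_of P"
    "gram b P1 $ 1 $ 1 = gram b P $ 1 $ 1" "gram b P1 $ 1 $ 2 = 0"
    "gram b P1 $ 2 $ 2 \<in> vball v (v (gram b P $ 1 $ 1))" "det (gram b P1) = det (gram b P)"
proof -
  let ?G = "gram b P"
  let ?a = "?G $ 1 $ 1"
  define Q where "Q = shear (- (?G$1$2 / ?a))"
  have "?G$1$2 / ?a \<in> \<O>"
    using vball_divide[OF G(2,1)] by (simp add: val_ring_eq_vball)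
  then have Q: "det Q \<noteq> 0" "integral_mat Q" "integral_mat (mat2_inv Q)"
    by (simp_all add: Q_def integral_mat_iff mat2_inv_nth det_shear val_ring_minus)
  have "(?G$1$2)\<^sup>2 / ?a \<in> vball v (v ?a)"
    using vball_divide[OF vball_mult[OF G(2) G(2)] G(1)] by (simp add: power2_eq_square)
  then have "?G$2$2 - (?G$1$2)\<^sup>2 / ?a \<in> vball v (v ?a)" using vball_diff G(3) by blast
  moreover have "gram b (P ** Q) $ 1 $ 1 = ?a" "gram b (P ** Q) $ 1 $ 2 = 0"
    "gram b (P ** Q) $ 2 $ 2 = ?G$2$2 - (?G$1$2)\<^sup>2 / ?a"
    using shear_congruence_diagonal[OF gram_symmetric G(1)] unfolding gram_mult Q_def by simp_all
  moreover have "det (gram b (P ** Q)) = det ?G" by (simp add: det_gram det_mul Q_def det_shear)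
  ultimately show ?thesis
    using that[of "P ** Q"] P Q lattice_of_mult_unimodular by (simp add: det_mul)
qed

text \<open>The evenness of v(det) allows a rescaling of the second vector of a diagonal basis.\<close>

lemma exists_modular_basis_diagonal_dominant:
  assumes P: "det P \<noteq> 0" and Ord: "Ord \<subseteq> End_lat (lattice_of P)" "dg ` Ord \<subseteq> Ord"
    and G: "gram b P $ 1 $ 1 \<noteq> 0" "gram b P $ 1 $ 2 \<in> vball v (v (gram b P $ 1 $ 1))"
      "gram b P $ 2 $ 2 \<in> vball v (v (gram b P $ 1 $ 1))"
    and even: "even (v (det (gram b P)))"
  shows "\<exists>P' m. det P' \<noteq> 0 \<and> Ord \<subseteq> End_lat (lattice_of P') \<and> modular_basis P' m"
proof -
  let ?a = "gram b P $ 1 $ 1"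
  obtain P1 where P1: "det P1 \<noteq> 0" "lattice_of P1 = lattice_of P"
    and G1: "gram b P1 $ 1 $ 1 = ?a" "gram b P1 $ 1 $ 2 = 0" "gram b P1 $ 2 $ 2 \<in> vball v (v ?a)"
      "det (gram b P1) = det (gram b P)"
    using exists_diagonal_basis[OF P G] by blast
  define \<beta> where "\<beta> = gram b P1 $ 2 $ 2"
  have det: "?a * \<beta> = det (gram b P)"
    using G1 gram_symmetric[of P1] by (simp add: \<beta>_def det_2)
  then have \<beta>: "\<beta> \<noteq> 0" using det_gram_nonzero[OF P] by auto
  then have le: "v ?a \<le> v \<beta>" using G1(3) by (simp add: \<beta>_def vball_iff)
  have "v (det (gram b P)) = v ?a + v \<beta>" using det \<beta> G(1) v_mult by metis
  moreover obtain e where "v (det (gram b P)) = 2 * e" using even by (rule evenE)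
  ultimately obtain k where k: "v \<beta> = v ?a + 2 * k" "k \<ge> 0"
    using le by (intro that[of "e - v ?a"]) auto
  let ?P' = "P1 ** diag2 (\<pi> powi (- k))"
  have "det ?P' \<noteq> 0" using P1(1) uniformizer_powi_nonzero by (simp add: det_mul det_diag2)
  moreover have "Ord \<subseteq> End_lat (lattice_of ?P')"
    using order_subset_End_rescaled[OF P1(1) _ Ord(2) G1(2)] P1(2) Ord(1) G1(1) G(1) k
    by (simp add: \<beta>_def)
  moreover have "modular_basis ?P' (v ?a)"
    using modular_basis_rescaled[OF P1(1) G1(2)] G1(1) G(1) \<beta> k(1) by (simp add: \<beta>_def)
  ultimately show ?thesis by blast
qed

lemma exists_modular_basis:
  assumes P: "det P \<noteq> 0" and Ord: "Ord \<subseteq> End_lat (lattice_of P)" "dg ` Ord \<subseteq> Ord"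
    and even: "even (v (det (form_matrix b)))"
  shows "\<exists>P' m. det P' \<noteq> 0 \<and> Ord \<subseteq> End_lat (lattice_of P') \<and> modular_basis P' m"
proof -
  let ?G = "gram b P"
  have even_G: "even (v (det ?G))"
    using even P det_form_matrix_nonzero by (simp add: det_gram v_mult v_power)
  have sym: "?G$2$1 = ?G$1$2" by (rule gram_symmetric)
  consider (dom11) "?G$1$1 \<noteq> 0 \<and> ?G$1$2 \<in> vball v (v (?G$1$1)) \<and> ?G$2$2 \<in> vball v (v (?G$1$1))"
    | (dom22) "?G$2$2 \<noteq> 0 \<and> ?G$1$2 \<in> vball v (v (?G$2$2)) \<and> ?G$1$1 \<in> vball v (v (?G$2$2))"
    | (off) "?G$1$2 \<noteq> 0" "?G$1$1 = 0 \<or> v (?G$1$2) < v (?G$1$1)" "?G$2$2 = 0 \<or> v (?G$1$2) < v (?G$2$2)"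
  proof -
    have "?G$1$1 * ?G$2$2 \<noteq> ?G$1$2 * ?G$1$2" using det_gram_nonzero[OF P] sym by (simp add: det_2)
    from dominant_entry_cases[OF this] show thesis using that by blast
  qed
  then show ?thesis
  proof cases
    case dom11
    then show ?thesis using exists_modular_basis_diagonal_dominant[OF P Ord _ _ _ even_G] by blast
  next
    case dom22
    have S: "det swap2 \<noteq> (0::'a)" "integral_mat swap2" "integral_mat (mat2_inv swap2)"
      by (simp_all add: integral_mat_iff mat2_inv_nth det_swap2)
    have PS: "det (P ** swap2) \<noteq> 0" "lattice_of (P ** swap2) = lattice_of P"
      using P S lattice_of_mult_unimodular by (simp_all add: det_mul)
    have "gram b (P ** swap2) $ 1 $ 1 = ?G$2$2" "gram b (P ** swap2) $ 1 $ 2 = ?G$1$2"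
      "gram b (P ** swap2) $ 2 $ 2 = ?G$1$1"
      unfolding gram_mult using sym by (simp_all add: mat2_simps)
    moreover have "det (gram b (P ** swap2)) = det ?G"
      by (simp add: det_gram det_mul det_swap2 power2_eq_square)
    ultimately show ?thesis
      using exists_modular_basis_diagonal_dominant[OF PS(1) _ Ord(2)] dom22 PS(2) Ord(1) even_G
      by simp
  next
    case off
    then show ?thesis using modular_basis_offdiagonal[OF P] P Ord(1) by blast
  qed
qed

end

definition conj_unit :: "'a::field^2^2 \<Rightarrow> 2 \<Rightarrow> 2 \<Rightarrow> 'a^2^2" where
  "conj_unit P i j = P ** mat_unit i j ** mat2_inv P"

lemma mat2_conj_conj_unit: "det P \<noteq> 0 \<Longrightarrow> mat2_inv P ** conj_unit P i j ** P = mat_unit i j"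
  unfolding conj_unit_def
  by (simp add: matrix_mul_assoc mat2_inv_left) (simp add: mat2_inv_left flip: matrix_mul_assoc)

lemma mem_span_conj_units:
  fixes R :: "'a::field set"
  assumes P: "det P \<noteq> 0" and R: "0 \<in> R" "\<And>a c. a \<in> R \<Longrightarrow> c \<in> R \<Longrightarrow> a + c \<in> R"
    and C: "\<And>i j. (mat2_inv P ** \<sigma> ** P) $ i $ j \<in> R"
    and S: "\<And>i j. conj_unit P i j \<in> S"
  shows "\<sigma> \<in> span_with R hscale S"
proof -
  define C where "C = mat2_inv P ** \<sigma> ** P"
  have "hscale (C$i$j) (conj_unit P i j) \<in> span_with R hscale S" for i j
    using span_with_mem[OF S, of "C$i$j" R hscale] C by (simp add: C_def)
  moreover have "\<sigma> = hscale (C$1$1) (conj_unit P 1 1) + hscale (C$1$2) (conj_unit P 1 2)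
      + hscale (C$2$1) (conj_unit P 2 1) + hscale (C$2$2) (conj_unit P 2 2)"
    using mat2_conj_expand[of P C "mat2_inv P"] mat2_conj_cancel[OF P, of \<sigma>]
    by (simp add: C_def conj_unit_def)
  ultimately show ?thesis using span_with_add_matrix[OF R] by metis
qed

context valued_field
begin

lemma End_lattice_of_is_order:
  assumes P: "det P \<noteq> 0"
  shows "is_order v (End_lat (lattice_of P))"
proof -
  let ?E = "End_lat (lattice_of P)"
  have E: "?E = {\<sigma>. integral_mat (mat2_inv P ** \<sigma> ** P)}" by (rule End_lattice_of[OF P])
  define S where "S = (\<lambda>(i, j). conj_unit P i j) ` UNIV"
  have in_S: "conj_unit P i j \<in> S" for i j by (auto simp: S_def)
  have in_E: "conj_unit P i j \<in> ?E" for i j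
    using mat2_conj_conj_unit[OF P] integral_mat_mat_unit by (simp add: E)
  have "finite S" by (simp add: S_def)
  moreover have "?E \<subseteq> span_with \<O> hscale S"
    using mem_span_conj_units[OF P _ _ _ in_S] val_ring_add by (auto simp: E integral_mat_def)
  moreover have "span_with \<O> hscale S \<subseteq> ?E"
  proof (rule span_with_least)
    show "0 \<in> ?E" by (simp add: E integral_mat_zero)
    show "A + B \<in> ?E" if "A \<in> ?E" "B \<in> ?E" for A B
      using that by (simp add: E matrix_add_ldistrib matrix_add_rdistrib integral_mat_add)
    show "hscale c A \<in> ?E" if "c \<in> \<O>" "A \<in> ?E" for c A
      using that by (simp add: E matrix_mult_hscale_right matrix_mult_hscale_left integral_mat_hscale)
    show "S \<subseteq> ?E" using in_E by (auto simp: S_def)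
  qed
  moreover have "span_with UNIV hscale ?E = UNIV"
    using mem_span_conj_units[OF P _ _ _ in_E] by auto
  moreover have "mat 1 \<in> ?E" using P by (simp add: E mat2_inv_left integral_mat_one)
  moreover have "A ** B \<in> ?E" if "A \<in> ?E" "B \<in> ?E" for A B
    using that mat2_conj_mult[OF P] by (simp add: E integral_mat_mult)
  ultimately show ?thesis unfolding is_order_def o_lattice_def by blast
qed

end

context quaternion_setting
begin

lemma dg_End_lattice_of:
  assumes P: "det P \<noteq> 0" and mod: "modular_basis P m" and \<sigma>: "\<sigma> \<in> End_lat (lattice_of P)"
  shows "dg \<sigma> \<in> End_lat (lattice_of P)"
proof -
  define C where "C = mat2_inv P ** \<sigma> ** P"
  define C' where "C' = mat2_inv P ** dg \<sigma> ** P"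
  define G where "G = hscale (\<pi> powi (- m)) (gram b P)"
  have C: "integral_mat C" using \<sigma> End_lattice_of[OF P] by (simp add: C_def)
  have G: "unimodular G" using mod by (simp add: modular_basis_def G_def)
  have "gram b P = hscale (\<pi> powi m) G"
    by (simp add: G_def hscale_hscale uniformizer_powi_minus_cancel)
  then have "hscale (\<pi> powi m) (G ** C) = hscale (\<pi> powi m) (transpose C' ** G)"
    using gram_adjoint[OF P, of \<sigma>] by (simp add: C_def C'_def matrix_mult_hscale_right matrix_mult_hscale_left)
  then have "G ** C = transpose C' ** G" using hscale_inj uniformizer_powi_nonzero by blast
  then have "transpose C' = G ** C ** mat2_inv G"
    using G by (simp add: unimodular_def matrix_mul_assoc mat2_inv_right flip: matrix_mul_assoc)
  then have "integral_mat (transpose C')"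
    using C G integral_mat_mat2_inv by (simp add: unimodular_def integral_mat_mult)
  then have "integral_mat C'" using integral_mat_transpose[of "transpose C'"] by simp
  then show ?thesis using End_lattice_of[OF P] by (simp add: C'_def)
qed

lemma inv_order_End_lattice_of:
  assumes P: "det P \<noteq> 0" and mod: "modular_basis P m"
  shows "inv_order v dg (End_lat (lattice_of P))"
proof -
  have "dg ` End_lat (lattice_of P) = End_lat (lattice_of P)"
    using dg_End_lattice_of[OF P mod] dg_dg by (metis image_subsetI subsetI subset_antisym image_eqI)
  then show ?thesis using End_lattice_of_is_order[OF P] by (simp add: inv_order_def)
qed

lemma dual_lattice_of_modular_basis:
  assumes P: "det P \<noteq> 0" and mod: "modular_basis P m"
  shows "dual_lattice v b (lattice_of P) = {y. \<pi> powi m *s y \<in> lattice_of P}"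
proof -
  define G where "G = hscale (\<pi> powi (- m)) (gram b P)"
  have G: "unimodular G" using mod by (simp add: modular_basis_def G_def)
  have gram: "gram b P = hscale (\<pi> powi m) G"
    by (simp add: G_def hscale_hscale uniformizer_powi_minus_cancel)
  have dual_iff: "y \<in> dual_lattice v b (lattice_of P) \<longleftrightarrow> integral_vec (\<pi> powi m *s (mat2_inv P *v y))"
    for y
  proof -
    define z where "z = \<pi> powi m *s (mat2_inv P *v y)"
    have "b y (P *v x) = bil G z x" for x
      using form_mat_vec[of P "mat2_inv P *v y" x] P
      by (simp add: z_def gram bil_hscale mat2_inv_cancel_left)
    then have "y \<in> dual_lattice v b (lattice_of P) \<longleftrightarrow> (\<forall>x. integral_vec x \<longrightarrow> bil G z x \<in> \<O>)"
      unfolding dual_lattice_def lattice_of_def by auto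
    also have "\<dots> \<longleftrightarrow> integral_vec z" by (rule integral_pairing_unimodular_iff[OF G])
    finally show ?thesis by (simp add: z_def)
  qed
  show ?thesis
  proof (intro set_eqI iffI)
    fix y assume "y \<in> dual_lattice v b (lattice_of P)"
    then have "integral_vec (\<pi> powi m *s (mat2_inv P *v y))" using dual_iff by blast
    moreover have "\<pi> powi m *s y = P *v (\<pi> powi m *s (mat2_inv P *v y))"
      using P by (simp add: mat_vec_smult mat2_inv_cancel_left)
    ultimately show "y \<in> {y. \<pi> powi m *s y \<in> lattice_of P}"
      unfolding lattice_of_def by blast
  next
    fix y assume "y \<in> {y. \<pi> powi m *s y \<in> lattice_of P}"
    then obtain x where x: "integral_vec x" "\<pi> powi m *s y = P *v x" unfolding lattice_of_def by blast
    then have "\<pi> powi m *s (mat2_inv P *v y) = x" using P by (metis mat2_inv_cancel_left' mat_vec_smult)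
    then show "y \<in> dual_lattice v b (lattice_of P)" using dual_iff x(1) by simp
  qed
qed

lemma modular_lattice_of_modular_basis:
  assumes P: "det P \<noteq> 0" and mod: "modular_basis P m"
  shows "modular_lattice v b (vball v m) (lattice_of P)"
proof -
  define D where "D = {y. \<pi> powi m *s y \<in> lattice_of P}"
  have "lattice_of P \<subseteq> span_with \<O> (*s) {a *s x | a x. a \<in> vball v m \<and> x \<in> D}"
  proof
    fix y assume y: "y \<in> lattice_of P"
    have "y = \<pi> powi m *s (\<pi> powi (- m) *s y)"
      by (simp add: uniformizer_powi_minus_cancel)
    moreover have "\<pi> powi (- m) *s y \<in> D" using y by (simp add: D_def uniformizer_powi_minus_cancel)
    ultimately have "y \<in> {a *s x | a x. a \<in> vball v m \<and> x \<in> D}"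
      using uniformizer_powi_in_vball by blast
    then show "y \<in> span_with \<O> (*s) {a *s x | a x. a \<in> vball v m \<and> x \<in> D}"
      using span_with_mem[of y _ 1 \<O> "(*s)"] by simp
  qed
  moreover have "a *s x \<in> lattice_of P" if "a \<in> vball v m" "x \<in> D" for a x
  proof -
    have "a / \<pi> powi m \<in> \<O>" "\<pi> powi m *s x \<in> lattice_of P"
      using that vball_divide[of a m "\<pi> powi m"] uniformizer_powi_nonzero
      by (simp_all add: D_def val_ring_eq_vball v_uniformizer_powi)
    then have "(a / \<pi> powi m) *s (\<pi> powi m *s x) \<in> lattice_of P" by (rule lattice_of_smult)
    moreover have "(a / \<pi> powi m) *s (\<pi> powi m *s x) = a *s x"
      using uniformizer_powi_nonzero[of m] by (simp add: vector_smult_assoc)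
    ultimately show ?thesis by (simp only:)
  qed
  then have "span_with \<O> (*s) {a *s x | a x. a \<in> vball v m \<and> x \<in> D} \<subseteq> lattice_of P"
    by (intro span_with_least zero_in_lattice_of lattice_of_add lattice_of_smult) blast+
  ultimately show ?thesis
    unfolding modular_lattice_def ideal_times_lattice_def
    using o_lattice_lattice_of[OF P] dual_lattice_of_modular_basis[OF P mod] by (simp add: D_def)
qed

lemma End_dual_lattice_of_modular_basis:
  assumes "det P \<noteq> 0" "modular_basis P m"
  shows "End_lat (dual_lattice v b (lattice_of P)) = End_lat (lattice_of P)"
  using dual_lattice_of_modular_basis[OF assms] End_lat_smult_preimage[OF uniformizer_powi_nonzero]
  by simp

end

section \<open>Discriminants\<close>

definition mat_unit4 :: "4 \<Rightarrow> 'a::field^2^2" where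
  "mat_unit4 i = (if i = 1 then mat_unit 1 1 else if i = 2 then mat_unit 2 2
                  else if i = 3 then mat_unit 1 2 else mat_unit 2 1)"

text \<open>The trace form on the matrix units is the permutation matrix of the transposition (3 4).\<close>

lemma det_trace_form_mat_unit4:
  "det (\<chi> (i::4) (j::4). trace (mat_unit4 i ** mat_unit4 j :: 'a::field^2^2)) = -1"
proof -
  let ?\<tau> = "Transposition.transpose (3::4) 4"
  have "(\<chi> (i::4) (j::4). trace (mat_unit4 i ** mat_unit4 j :: 'a^2^2)) = (\<chi> i. (mat 1 :: 'a^4^4) $ ?\<tau> i)"
    by (simp add: vec_eq_iff forall_4 mat_unit4_def trace_mat_unit_mult mat_def transpose_def)
  moreover have "?\<tau> permutes UNIV" by (rule permutes_swap_id) auto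
  ultimately show ?thesis by (simp add: det_permute_rows sign_swap_id)
qed

context valued_field
begin

lemma trace_form_of_End_lattice_of:
  assumes P: "det P \<noteq> 0"
  shows "\<exists>\<alpha>. (\<forall>i. \<alpha> i \<in> End_lat (lattice_of P)) \<and> det (\<chi> (i::4) (j::4). trace (\<alpha> i ** \<alpha> j)) = -1"
proof -
  define \<alpha> where "\<alpha> i = P ** mat_unit4 i ** mat2_inv P" for i
  have "\<forall>i. \<alpha> i \<in> End_lat (lattice_of P)"
    using mat2_conj_conj_unit[OF P] integral_mat_mat_unit
    by (simp add: End_lattice_of[OF P] \<alpha>_def mat_unit4_def conj_unit_def)
  moreover have "trace (\<alpha> i ** \<alpha> j) = trace (mat_unit4 i ** mat_unit4 j)" for i j
  proof -
    have "\<alpha> i ** \<alpha> j = P ** (mat_unit4 i ** mat_unit4 j) ** mat2_inv P"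
      using P by (simp add: \<alpha>_def matrix_mul_assoc mat2_inv_cancel_right)
    then show ?thesis using trace_mat2_conj[OF P] by simp
  qed
  then have "det (\<chi> (i::4) (j::4). trace (\<alpha> i ** \<alpha> j)) = -1"
    using det_trace_form_mat_unit4 by simp
  ultimately show ?thesis by blast
qed

lemma disc_full_End_lattice_of:
  assumes P: "det P \<noteq> 0"
  shows "disc_full v (End_lat (lattice_of P)) = \<O>"
proof -
  let ?E = "End_lat (lattice_of P)"
  have E: "?E = {\<sigma>. integral_mat (mat2_inv P ** \<sigma> ** P)}" by (rule End_lattice_of[OF P])
  have mult: "A ** B \<in> ?E" if "A \<in> ?E" "B \<in> ?E" for A B
    using End_lattice_of_is_order[OF P] that unfolding is_order_def by blast
  have trace: "trace \<sigma> \<in> \<O>" if "\<sigma> \<in> ?E" for \<sigma>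
  proof -
    have "trace \<sigma> = trace (mat2_inv P ** \<sigma> ** P)"
      using mat2_conj_cancel[OF P, of \<sigma>] trace_mat2_conj[OF P] by metis
    then show ?thesis using that E by (simp add: trace_def integral_mat_def val_ring_sum)
  qed
  define X where "X = {det (\<chi> (i::4) (j::4). trace (\<alpha> i ** \<alpha> j)) | \<alpha>. \<forall>i. \<alpha> i \<in> ?E}"
  have X: "X \<subseteq> \<O>" unfolding X_def using trace mult by (auto intro!: det_integral)
  have minus_one: "-1 \<in> X"
    using trace_form_of_End_lattice_of[OF P] unfolding X_def by (auto intro: sym)
  have "span_with \<O> (*) X = \<O>"
  proof
    show "span_with \<O> (*) X \<subseteq> \<O>"
      using X by (intro span_with_least) (auto intro: val_ring_add val_ring_mult)
    show "\<O> \<subseteq> span_with \<O> (*) X"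
    proof
      fix x assume "x \<in> \<O>"
      then have "(- x) * (-1) \<in> span_with \<O> (*) X"
        using minus_one by (intro span_with_mem val_ring_minus)
      then show "x \<in> span_with \<O> (*) X" by simp
    qed
  qed
  then show ?thesis by (simp add: disc_full_def ideal_gen_def X_def)
qed

lemma frac_ideal_vball: "frac_ideal v (vball v m)"
proof -
  have "vball v m = span_with \<O> (*) {\<pi> powi m}"
  proof
    show "vball v m \<subseteq> span_with \<O> (*) {\<pi> powi m}"
    proof
      fix x assume "x \<in> vball v m"
      then have "x / \<pi> powi m \<in> \<O>"
        using vball_divide[of x m "\<pi> powi m"] uniformizer_powi_nonzero
        by (simp add: val_ring_eq_vball v_uniformizer_powi)
      then have "(x / \<pi> powi m) * \<pi> powi m \<in> span_with \<O> (*) {\<pi> powi m}"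
        by (rule span_with_mem[rotated]) simp
      then show "x \<in> span_with \<O> (*) {\<pi> powi m}" using uniformizer(1) by simp
    qed
    show "span_with \<O> (*) {\<pi> powi m} \<subseteq> vball v m"
      by (rule span_with_least) (auto intro: vball_add vball_scale uniformizer_powi_in_vball)
  qed
  moreover have "x \<in> span_with UNIV (*) (vball v m)" for x
    using span_with_mem[OF uniformizer_powi_in_vball, of "x / \<pi> powi m" UNIV "(*)" m]
      uniformizer(1)
    by simp
  then have "span_with UNIV (*) (vball v m) = UNIV" by blast
  ultimately show ?thesis
    unfolding frac_ideal_def o_lattice_def by (intro conjI exI[of _ "{\<pi> powi m}"]) simp_all
qed

lemma frac_ideal_eq_vball:
  assumes "frac_ideal v D"
  shows "\<exists>k. D = vball v k"
proof -
  obtain S where S: "finite S" "D = span_with \<O> (*) S" and spans: "span_with UNIV (*) D = UNIV"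
    using assms unfolding frac_ideal_def o_lattice_def by blast
  have "S - {0} \<noteq> {}"
  proof
    assume "S - {0} = {}"
    then have "D \<subseteq> {0}" unfolding S(2) by (intro span_with_least) auto
    then have "span_with UNIV (*) D \<subseteq> {0}" by (intro span_with_least) auto
    then show False using spans by (metis UNIV_I one_neq_zero singletonD subsetD)
  qed
  define k where "k = Min (v ` (S - {0}))"
  have fin: "finite (v ` (S - {0}))" using S(1) by simp
  have "k \<in> v ` (S - {0})" unfolding k_def using Min_in[OF fin] \<open>S - {0} \<noteq> {}\<close> by blast
  then obtain s0 where s0: "s0 \<in> S" "s0 \<noteq> 0" "v s0 = k" by auto
  have "D \<subseteq> vball v k" unfolding S(2)
  proof (rule span_with_least)
    show "S \<subseteq> vball v k" using fin by (auto simp: vball_iff k_def intro!: Min_le)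
  qed (auto intro: vball_add vball_scale)
  moreover have "vball v k \<subseteq> D"
  proof
    fix y assume y: "y \<in> vball v k"
    have "y / s0 \<in> \<O>" using vball_divide[OF y s0(2)] s0(3) by (simp add: val_ring_eq_vball)
    then have "(y / s0) * s0 \<in> D" unfolding S(2) by (rule span_with_mem[OF s0(1), rotated])
    then show "y \<in> D" using s0(2) by simp
  qed
  ultimately show ?thesis by blast
qed

lemma ideal_prod_vball: "ideal_prod v (vball v k) (vball v k) = vball v (2 * k)"
proof
  show "ideal_prod v (vball v k) (vball v k) \<subseteq> vball v (2 * k)"
    unfolding ideal_prod_def ideal_gen_def
  proof (rule span_with_least)
    show "{a * b |a b. a \<in> vball v k \<and> b \<in> vball v k} \<subseteq> vball v (2 * k)"
    proof clarify
      fix a c assume "a \<in> vball v k" "c \<in> vball v k"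
      then have "a * c \<in> vball v (k + k)" by (rule vball_mult)
      then show "a * c \<in> vball v (2 * k)" by (simp only: mult_2)
    qed
  qed (simp_all add: vball_add vball_scale)
  show "vball v (2 * k) \<subseteq> ideal_prod v (vball v k) (vball v k)"
  proof
    fix y assume y: "y \<in> vball v (2 * k)"
    have "y / \<pi> powi k \<in> vball v k"
      using vball_divide[OF y uniformizer_powi_nonzero[of k]] by (simp add: v_uniformizer_powi)
    moreover have "y = \<pi> powi k * (y / \<pi> powi k)" using uniformizer_powi_nonzero[of k] by simp
    ultimately have "y \<in> {a * b |a b. a \<in> vball v k \<and> b \<in> vball v k}"
      using uniformizer_powi_in_vball by blast
    then have "1 * y \<in> span_with \<O> (*) {a * b |a b. a \<in> vball v k \<and> b \<in> vball v k}"
      by (rule span_with_mem) simp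
    then show "y \<in> ideal_prod v (vball v k) (vball v k)" by (simp add: ideal_prod_def ideal_gen_def)
  qed
qed

lemma reduced_disc_eq_val_ring:
  assumes "disc_full v Ord = \<O>"
  shows "reduced_disc v Ord = \<O>"
  unfolding reduced_disc_def
proof (rule the_equality)
  show "frac_ideal v \<O> \<and> ideal_prod v \<O> \<O> = disc_full v Ord"
    using frac_ideal_vball[of 0] ideal_prod_vball[of 0] assms by (simp add: val_ring_eq_vball)
next
  fix D assume D: "frac_ideal v D \<and> ideal_prod v D D = disc_full v Ord"
  then obtain k where k: "D = vball v k" using frac_ideal_eq_vball by blast
  then have eq: "vball v (2 * k) = vball v 0"
    using D ideal_prod_vball assms by (simp add: val_ring_eq_vball)
  have "1 \<in> vball v (2 * k)" "\<pi> powi (2 * k) \<in> vball v 0"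
    using eq uniformizer_powi_in_vball[of "2 * k"] by (auto simp: vball_iff v_one)
  then have "2 * k \<le> 0" "0 \<le> 2 * k"
    using uniformizer_powi_nonzero[of "2 * k"] v_uniformizer_powi[of "2 * k"]
    by (auto simp: vball_iff v_one)
  then have "k = 0" by simp
  then show "D = \<O>" using k by (simp add: val_ring_eq_vball)
qed

end

theorem theorem7p3:
  fixes v :: "'a::field_char_0 \<Rightarrow> int"
    and dg :: "'a^2^2 \<Rightarrow> 'a^2^2"
    and b :: "'a^2 \<Rightarrow> 'a^2 \<Rightarrow> 'a"
    and lam :: 'a
    and Ord :: "('a^2^2) set"
  assumes "dyadic_local_field v"
    and "orthogonal_involution dg"
    and "adapted_form dg b"
    and "lam \<in> disc_inv dg \<inter> val_ring v"
    and "ideal_gen v {lam} = iota v (disc_inv dg)"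
    and "quad_defect v (- lam) \<noteq> max_ideal v"
    and "max_inv_order v dg Ord"
  shows "(\<exists>I L. frac_ideal v I \<and> modular_lattice v b I L \<and>
                Ord = End_lat L \<inter> End_lat (dual_lattice v b L)) \<and>
         reduced_disc v Ord = disc_H v \<inter> iota v (disc_inv dg) \<and>
         disc_H v \<inter> iota v (disc_inv dg) = val_ring v"
proof -
  interpret quaternion_setting v dg b
    using assms(1-3) by unfold_locales (simp_all add: dyadic_local_field_def)
  have unit: "lam \<noteq> 0 \<and> v lam = 0" using normalized_disc_is_unit assms(4-6) by blast
  have iota: "iota v (disc_inv dg) = \<O>" using iota_disc_inv_eq_val_ring unit assms(5) by blast
  have inv: "inv_order v dg Ord" and maximal: "\<And>O'. inv_order v dg O' \<Longrightarrow> Ord \<subseteq> O' \<Longrightarrow> O' = Ord"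
    using assms(7) unfolding max_inv_order_def by auto
  then have Ord: "is_order v Ord" "dg ` Ord \<subseteq> Ord" unfolding inv_order_def by auto
  obtain P0 where P0: "det P0 \<noteq> 0" "Ord \<subseteq> End_lat (lattice_of P0)"
    using order_subset_End_lattice_of[OF Ord(1)] by blast
  have "even (v (det (form_matrix b)))" using even_v_det_form_matrix assms(4) unit by blast
  then obtain P m where P: "det P \<noteq> 0" "Ord \<subseteq> End_lat (lattice_of P)" "modular_basis P m"
    using exists_modular_basis[OF P0 Ord(2)] by blast
  have "End_lat (lattice_of P) = Ord"
    using maximal[OF inv_order_End_lattice_of[OF P(1,3)] P(2)] .
  then have "frac_ideal v (vball v m) \<and> modular_lattice v b (vball v m) (lattice_of P) \<and>
      Ord = End_lat (lattice_of P) \<inter> End_lat (dual_lattice v b (lattice_of P))"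
    using frac_ideal_vball modular_lattice_of_modular_basis[OF P(1,3)]
      End_dual_lattice_of_modular_basis[OF P(1,3)] by simp
  moreover have "reduced_disc v Ord = \<O>"
    using reduced_disc_eq_val_ring disc_full_End_lattice_of[OF P(1)] \<open>End_lat (lattice_of P) = Ord\<close>
    by simp
  ultimately show ?thesis using iota by (auto simp: disc_H_def)
qed

end
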